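(* Let $w\in\mathcal S_n$ and $a,b\in\mathrm R(w)$. Then $d([a],[b])=1$ if and only if $t(a,b)=1$, i.e. if and only if there is exactly one triple $(x,y,z)\in\mathrm T_w$ with $\Gamma(a,(x,y,z))\neq\Gamma(b,(x,y,z))$.
   Context: Permutations are in one-line notation. A word $a=a_1\cdots a_\ell$ with letters in $\{1,\dots,n-1\}$ acts on a word of length $n$ by successively swapping the entries in positions $a_j$ and $a_j+1$. $\mathrm R(w)$ is the set of reduced words of $w$ (words of length $\ell(w)$, the number of inversions of $w$, whose action on $12\cdots n$ yields $w$). For $a\in\mathrm R(w)$ and an inversion $(p,q)$ of $w$ ($p>q$, $p$ left of $q$ in $w$), $P_a(p,q)$ is the index of the unique step of $a$ at which $p$ and $q$ are swapped. Commutation: replacing a factor $ij$, $|i-j|\ge2$, by $ji$; long braid relation: replacing a factor $i(i+1)i$ by $(i+1)i(i+1)$ or vice versa. $[a]$ is the commutation class of $a$ (reduced words reachable by commutations). $C(w)$ is the graph whose vertices are commutation classes, with $[a]\ne[b]$ adjacent when some $a'\in[a]$, $b'\in[b]$ differ by one long braid relation; $d$ is its graph distance. $\mathrm T_w$ is the set of triples $(x,y,z)$, $x<y<z$, with $z,y,x$ appearing in this order in $w$. $\Gamma(a,(x,y,z))=1$ if $P_a(y,x)>P_a(z,y)$ and $0$ otherwise. $t(a,b)=\sum_{(x,y,z)\in\mathrm T_w}\big(\Gamma(a,(x,y,z))+\Gamma(b,(x,y,z))\bmod 2\big)$. *)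

theory Defs
  imports Main "HOL-Library.Extended_Nat"
begin

(* Permutations of {1..n} in one-line notation, as lists *)
definition is_perm :: "nat \<Rightarrow> nat list \<Rightarrow> bool" where
  "is_perm n w \<longleftrightarrow> distinct w \<and> set w = {1..n}"

definition id_perm :: "nat \<Rightarrow> nat list" where
  "id_perm n = [1..<n+1]"

(* swap the entries in (1-based) positions i and i+1 *)
definition swap_pos :: "nat \<Rightarrow> nat list \<Rightarrow> nat list" where
  "swap_pos i xs = xs[i - 1 := xs ! i, i := xs ! (i - 1)]"

(* action of a word: successive swaps, letters applied from left to right *)
definition act :: "nat list \<Rightarrow> nat list \<Rightarrow> nat list" where
  "act a xs = fold swap_pos a xs"

definition inv_count :: "nat list \<Rightarrow> nat" where
  "inv_count w = card {(i, j). i < j \<and> j < length w \<and> w ! i > w ! j}"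

definition reduced_words :: "nat \<Rightarrow> nat list \<Rightarrow> nat list set" where
  "reduced_words n w = {a. set a \<subseteq> {1..n - 1} \<and> length a = inv_count w
      \<and> act a (id_perm n) = w}"

definition state :: "nat \<Rightarrow> nat list \<Rightarrow> nat \<Rightarrow> nat list" where
  "state n a k = act (take k a) (id_perm n)"

(* P_a(p,q): the (1-based) index of the unique step of a at which p and q are swapped *)
definition P_idx :: "nat \<Rightarrow> nat list \<Rightarrow> nat \<Rightarrow> nat \<Rightarrow> nat" where
  "P_idx n a p q = (THE j. 1 \<le> j \<and> j \<le> length a \<and>
      {state n a (j - 1) ! (a ! (j - 1) - 1), state n a (j - 1) ! (a ! (j - 1))} = {p, q})"

definition comm_step :: "nat list \<Rightarrow> nat list \<Rightarrow> bool" where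
  "comm_step a b \<longleftrightarrow> (\<exists>u v i j. (i \<ge> j + 2 \<or> j \<ge> i + 2) \<and>
      a = u @ [i, j] @ v \<and> b = u @ [j, i] @ v)"

definition braid_step :: "nat list \<Rightarrow> nat list \<Rightarrow> bool" where
  "braid_step a b \<longleftrightarrow> (\<exists>u v i.
      (a = u @ [i, i+1, i] @ v \<and> b = u @ [i+1, i, i+1] @ v) \<or>
      (a = u @ [i+1, i, i+1] @ v \<and> b = u @ [i, i+1, i] @ v))"

definition comm_class :: "nat list \<Rightarrow> nat list set" where
  "comm_class a = {b. comm_step\<^sup>*\<^sup>* a b}"

definition C_vertices :: "nat \<Rightarrow> nat list \<Rightarrow> nat list set set" where
  "C_vertices n w = comm_class ` reduced_words n w"

definition C_adj :: "nat \<Rightarrow> nat list \<Rightarrow> nat list set \<Rightarrow> nat list set \<Rightarrow> bool" where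
  "C_adj n w A B \<longleftrightarrow> A \<in> C_vertices n w \<and> B \<in> C_vertices n w \<and> A \<noteq> B \<and>
      (\<exists>a' \<in> A. \<exists>b' \<in> B. braid_step a' b')"

definition C_walk :: "nat \<Rightarrow> nat list \<Rightarrow> nat list set \<Rightarrow> nat list set \<Rightarrow> nat \<Rightarrow> bool" where
  "C_walk n w A B k \<longleftrightarrow> (\<exists>ps. length ps = k + 1 \<and> ps ! 0 = A \<and> ps ! k = B \<and>
      set ps \<subseteq> C_vertices n w \<and> (\<forall>i < k. C_adj n w (ps ! i) (ps ! (i + 1))))"

(* graph distance d in C(w) (infinity if not connected) *)
definition C_dist :: "nat \<Rightarrow> nat list \<Rightarrow> nat list set \<Rightarrow> nat list set \<Rightarrow> enat" where
  "C_dist n w A B = (INF k \<in> {k. C_walk n w A B k}. enat k)"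

definition pos :: "nat list \<Rightarrow> nat \<Rightarrow> nat" where
  "pos w v = (THE i. i < length w \<and> w ! i = v)"

definition T_set :: "nat list \<Rightarrow> (nat \<times> nat \<times> nat) set" where
  "T_set w = {(x, y, z). x < y \<and> y < z \<and> x \<in> set w \<and> y \<in> set w \<and> z \<in> set w \<and>
      pos w z < pos w y \<and> pos w y < pos w x}"

definition Gamma :: "nat \<Rightarrow> nat list \<Rightarrow> nat \<times> nat \<times> nat \<Rightarrow> nat" where
  "Gamma n a xyz = (case xyz of (x, y, z) \<Rightarrow>
      (if P_idx n a y x > P_idx n a z y then 1 else 0))"

definition t_count :: "nat \<Rightarrow> nat list \<Rightarrow> nat list \<Rightarrow> nat list \<Rightarrow> nat" where
  "t_count n w a b = (\<Sum>xyz \<in> T_set w. (Gamma n a xyz + Gamma n b xyz) mod 2)"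

end

theory Submission
  imports Defs
begin

text \<open>A reduced word \<open>a\<close> of \<open>w\<close> is recorded by the list of inversions of \<open>w\<close> in the order in
  which \<open>a\<close> creates them. A commutation move exchanges two adjacent entries of this list that
  share no value, and a long braid move reverses three consecutive entries
  \<open>(y, x), (z, x), (z, y)\<close> coming from a triple \<open>x < y < z\<close> of \<open>T_w\<close>. Hence a commutation class is
  determined by the relative order of all pairs of inversions sharing a value, and for the
  three inversions of a triple in \<open>T_w\<close> this order is determined by the single bit \<open>\<Gamma>\<close>
  (when \<open>(z, x)\<close> is created, exactly one of \<open>(y, x)\<close>, \<open>(z, y)\<close> already exists).

  If \<open>[a]\<close> and \<open>[b]\<close> are adjacent, the braid move changes \<open>\<Gamma>\<close> exactly at its own triple.
  Conversely, if \<open>\<Gamma>\<close> differs at a single triple, the orders of \<open>a\<close> and \<open>b\<close> agree on all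
  dependent pairs except inside that triple, where they are reversed. Then no chain of
  dependent inversions can leave the triple and come back, so commutations bring its three
  inversions together in \<open>a\<close>; reversing them by one braid move yields a word commuting to \<open>b\<close>.\<close>

lemma length_swap_pos[simp]: "length (swap_pos c t) = length t"
  by (simp add: swap_pos_def)

lemma nth_swap_pos:
  assumes "1 \<le> c" "c < length t" "j < length t"
  shows "swap_pos c t ! j = (if j = c - 1 then t ! c else if j = c then t ! (c - 1) else t ! j)"
  using assms by (auto simp: swap_pos_def nth_list_update)

lemma set_distinct_swap_pos:
  assumes "1 \<le> c" "c < length t"
  shows "set (swap_pos c t) = set t" "distinct (swap_pos c t) = distinct t"
proof -
  have e: "swap_pos c t = t[c - 1 := t ! c, c := t ! (c - 1)]" by (simp add: swap_pos_def)
  show "set (swap_pos c t) = set t" unfolding e using assms by (simp add: set_swap)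
  show "distinct (swap_pos c t) = distinct t" unfolding e using assms by (simp add: distinct_swap)
qed

lemma swap_pos_commute:
  assumes "1 \<le> c1" "c1 < length t" "1 \<le> c2" "c2 < length t" "c1 \<ge> c2 + 2 \<or> c2 \<ge> c1 + 2"
  shows "swap_pos c1 (swap_pos c2 t) = swap_pos c2 (swap_pos c1 t)"
  by (rule nth_equalityI) (use assms in \<open>auto simp: nth_swap_pos\<close>)

lemma pos_nth:
  assumes "distinct t" "i < length t"
  shows "pos t (t ! i) = i"
  unfolding pos_def
  by (rule the_equality) (use assms nth_eq_iff_index_eq in auto)

lemma pos_in:
  assumes "distinct t" "v \<in> set t"
  shows "pos t v < length t" "t ! pos t v = v"
proof -
  obtain i where "i < length t" "t ! i = v" using assms by (auto simp: in_set_conv_nth)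
  thus "pos t v < length t" "t ! pos t v = v" using pos_nth[OF assms(1)] by auto
qed

lemma pos_swap_pos:
  assumes "distinct t" "1 \<le> c" "c < length t" "r \<in> set t"
  shows "pos (swap_pos c t) r = (if r = t ! (c - 1) then c else if r = t ! c then c - 1 else pos t r)"
proof -
  have d: "distinct (swap_pos c t)" using set_distinct_swap_pos assms by simp
  obtain i where i: "i < length t" "t ! i = r" using assms by (auto simp: in_set_conv_nth)
  have ne: "t ! (c - 1) \<noteq> t ! c" using assms nth_eq_iff_index_eq by fastforce
  show ?thesis
  proof (cases "r = t ! (c - 1)")
    case True
    hence "swap_pos c t ! c = r" using assms by (simp add: nth_swap_pos)
    thus ?thesis using pos_nth[OF d, of c] assms True by simp
  next
    case F1: False
    show ?thesis
    proof (cases "r = t ! c")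
      case True
      hence "swap_pos c t ! (c - 1) = r" using assms by (simp add: nth_swap_pos)
      thus ?thesis using pos_nth[OF d, of "c - 1"] assms True F1 by simp
    next
      case False
      hence "i \<noteq> c" "i \<noteq> c - 1" using i F1 by auto
      hence "swap_pos c t ! i = r" using assms i by (simp add: nth_swap_pos)
      moreover have "pos t r = i" using pos_nth[OF assms(1) i(1)] i by simp
      ultimately show ?thesis using pos_nth[OF d, of i] i F1 False by simp
    qed
  qed
qed

lemma pos_outside_swap:
  assumes "distinct t" "1 \<le> c" "c < length t" "r \<in> set t" "r \<noteq> t ! (c - 1)" "r \<noteq> t ! c"
  shows "pos t r < c - 1 \<or> c < pos t r"
proof -
  have "t ! pos t r = r" using pos_in[OF assms(1,4)] by blast
  hence "pos t r \<noteq> c - 1" "pos t r \<noteq> c" using assms by auto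
  thus ?thesis by linarith
qed

fun precedes :: "'a list \<Rightarrow> 'a \<Rightarrow> 'a \<Rightarrow> bool" where
  "precedes [] e f = False"
| "precedes (x # xs) e f = ((x = e \<and> f \<in> set xs) \<or> precedes xs e f)"

lemma precedes_set: "precedes xs e f \<Longrightarrow> e \<in> set xs \<and> f \<in> set xs"
  by (induction xs) auto

lemma precedes_append: "precedes (xs @ ys) e f \<longleftrightarrow> precedes xs e f \<or> precedes ys e f \<or> (e \<in> set xs \<and> f \<in> set ys)"
  by (induction xs) (auto dest: precedes_set)

lemma precedes_irrefl: "distinct xs \<Longrightarrow> \<not> precedes xs e e"
  by (induction xs) (auto dest: precedes_set)

lemma precedes_asym: "distinct xs \<Longrightarrow> precedes xs e f \<Longrightarrow> \<not> precedes xs f e"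
  by (induction xs) (auto dest: precedes_set)

lemma precedes_total: "e \<in> set xs \<Longrightarrow> f \<in> set xs \<Longrightarrow> e \<noteq> f \<Longrightarrow> precedes xs e f \<or> precedes xs f e"
  by (induction xs) auto

lemma precedes_trans: "distinct xs \<Longrightarrow> precedes xs e f \<Longrightarrow> precedes xs f g \<Longrightarrow> precedes xs e g"
  by (induction xs) (auto dest: precedes_set)

lemma precedes_filter: "precedes (filter P xs) e f \<longleftrightarrow> P e \<and> P f \<and> precedes xs e f"
  by (induction xs) auto

lemma precedes_take:
  assumes "distinct xs" "k < length xs"
  shows "e \<in> set (take k xs) \<longleftrightarrow> precedes xs e (xs ! k)"
proof -
  have xs: "xs = take k xs @ xs ! k # drop (Suc k) xs"
    using assms(2) by (simp add: id_take_nth_drop)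
  have d: "distinct (take k xs @ xs ! k # drop (Suc k) xs)" using assms(1) xs by simp
  have "precedes xs e (xs ! k) \<longleftrightarrow> precedes (take k xs @ xs ! k # drop (Suc k) xs) e (xs ! k)"
    using xs by simp
  also have "\<dots> \<longleftrightarrow> e \<in> set (take k xs)"
    using d by (auto simp: precedes_append dest: precedes_set)
  finally show ?thesis by simp
qed

lemma precedes_nth:
  assumes "distinct xs" "i < length xs" "j < length xs"
  shows "precedes xs (xs ! i) (xs ! j) \<longleftrightarrow> i < j"
proof -
  have "precedes xs (xs ! i) (xs ! j) \<longleftrightarrow> xs ! i \<in> set (take j xs)"
    using precedes_take[OF assms(1) assms(3)] by simp
  also have "\<dots> \<longleftrightarrow> i < j"
  proof
    assume "xs ! i \<in> set (take j xs)"
    then obtain i' where "i' < length (take j xs)" "take j xs ! i' = xs ! i"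
      by (auto simp: in_set_conv_nth)
    thus "i < j" using assms nth_eq_iff_index_eq by fastforce
  next
    assume "i < j"
    thus "xs ! i \<in> set (take j xs)" using assms by (auto simp: in_set_conv_nth intro!: exI[of _ i])
  qed
  finally show ?thesis .
qed

lemma precedes_rev: "precedes (rev K) e f \<longleftrightarrow> precedes K f e"
  by (induction K) (auto simp: precedes_append)

lemma precedes_swap_adjacent:
  assumes "(e, f) \<noteq> (g, h)" "(e, f) \<noteq> (h, g)"
  shows "precedes (pre @ g # h # post) e f \<longleftrightarrow> precedes (pre @ h # g # post) e f"
  using assms by (auto simp: precedes_append)

lemma precedes_rev_block_outside:
  "\<not> (e \<in> set K \<and> f \<in> set K) \<Longrightarrow> precedes (L @ K @ U) e f \<longleftrightarrow> precedes (L @ rev K @ U) e f"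
  by (auto simp: precedes_append precedes_rev dest: precedes_set)

lemma precedes_in_block:
  "set K \<inter> set L = {} \<Longrightarrow> set K \<inter> set U = {} \<Longrightarrow> e \<in> set K \<Longrightarrow> f \<in> set K \<Longrightarrow>
   precedes (L @ K @ U) e f \<longleftrightarrow> precedes K e f"
  by (auto simp: precedes_append dest: precedes_set)

lemma precedes_rev_block:
  assumes d: "distinct (L @ K @ U)"
  shows "precedes (L @ rev K @ U) e f \<longleftrightarrow>
    (if e \<in> set K \<and> f \<in> set K then precedes K f e else precedes (L @ K @ U) e f)"
proof (cases "e \<in> set K \<and> f \<in> set K")
  case True
  have disj: "set (rev K) \<inter> set L = {}" "set (rev K) \<inter> set U = {}" using d by auto
  show ?thesis using precedes_in_block[OF disj] True precedes_rev by simp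
next
  case False
  have "precedes (L @ K @ U) e f \<longleftrightarrow> precedes (L @ rev K @ U) e f"
    by (rule precedes_rev_block_outside[OF False])
  thus ?thesis using False by auto
qed

lemma precedes_rev_block_differ:
  assumes d: "distinct (L @ K @ U)"
  shows "precedes (L @ rev K @ U) e f \<noteq> precedes (L @ K @ U) e f \<longleftrightarrow> e \<in> set K \<and> f \<in> set K \<and> e \<noteq> f"
proof -
  have dK: "distinct K" and disj: "set K \<inter> set L = {}" "set K \<inter> set U = {}" using d by auto
  have "precedes K f e \<noteq> precedes K e f" if "e \<in> set K" "f \<in> set K" "e \<noteq> f"
    using precedes_total[OF that] precedes_asym[OF dK] by blast
  thus ?thesis using precedes_rev_block[OF d] precedes_in_block[OF disj] precedes_irrefl[OF dK] by auto
qed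

lemma precedes_eq_if_consistent:
  assumes dE: "distinct E" and dK: "distinct K"
    and consistent: "\<And>e f. e \<in> set E \<Longrightarrow> f \<in> set E \<Longrightarrow> precedes K e f \<Longrightarrow> precedes E e f"
    and ef: "e \<in> set K" "f \<in> set K" "e \<in> set E" "f \<in> set E"
  shows "precedes E e f \<longleftrightarrow> precedes K e f"
proof
  assume l: "precedes E e f"
  have "e \<noteq> f" using l precedes_irrefl[OF dE] by metis
  hence "precedes K e f \<or> precedes K f e" using precedes_total[OF ef(1,2)] by blast
  thus "precedes K e f" using consistent[OF ef(4,3)] l precedes_asym[OF dE] by blast
qed (use consistent ef in blast)

section \<open>The inversions created by a word\<close>

fun swapped_pairs :: "nat list \<Rightarrow> nat list \<Rightarrow> (nat \<times> nat) list" where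
  "swapped_pairs s [] = []"
| "swapped_pairs s (c # a) = (s ! c, s ! (c - 1)) # swapped_pairs (swap_pos c s) a"

fun ascent_word :: "nat list \<Rightarrow> nat list \<Rightarrow> bool" where
  "ascent_word s [] = True"
| "ascent_word s (c # a) = (1 \<le> c \<and> c < length s \<and> s ! (c - 1) < s ! c \<and> ascent_word (swap_pos c s) a)"

abbreviation inv_seq :: "nat \<Rightarrow> nat list \<Rightarrow> (nat \<times> nat) list" where
  "inv_seq n a \<equiv> swapped_pairs (id_perm n) a"

lemma length_swapped_pairs[simp]: "length (swapped_pairs s a) = length a"
  by (induction a arbitrary: s) auto

lemma swapped_pairs_append: "swapped_pairs s (a1 @ a2) = swapped_pairs s a1 @ swapped_pairs (fold swap_pos a1 s) a2"
  by (induction a1 arbitrary: s) auto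

lemma ascent_word_append: "ascent_word s (a1 @ a2) \<longleftrightarrow> ascent_word s a1 \<and> ascent_word (fold swap_pos a1 s) a2"
  by (induction a1 arbitrary: s) auto

lemma ascent_word_fold:
  assumes "ascent_word s a"
  shows "length (fold swap_pos a s) = length s \<and> set (fold swap_pos a s) = set s
     \<and> distinct (fold swap_pos a s) = distinct s"
  using assms by (induction a arbitrary: s) (auto simp: set_distinct_swap_pos)

lemma swapped_pairs_take: "swapped_pairs s (take k a) = take k (swapped_pairs s a)"
  by (induction a arbitrary: s k) (auto simp: take_Cons split: nat.splits)

lemma swapped_pairs_nth:
  assumes "k < length a"
  shows "swapped_pairs s a ! k = (fold swap_pos (take k a) s ! (a ! k), fold swap_pos (take k a) s ! (a ! k - 1))"
proof -
  have "drop k a = a ! k # drop (Suc k) a" using assms by (simp add: Cons_nth_drop_Suc)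
  have "swapped_pairs s a = swapped_pairs s (take k a) @ swapped_pairs (fold swap_pos (take k a) s) (drop k a)"
    by (metis append_take_drop_id swapped_pairs_append)
  thus ?thesis using \<open>drop k a = _\<close> assms by (simp add: nth_append)
qed

lemma ascent_word_take_drop: "ascent_word s a \<Longrightarrow> ascent_word s (take k a) \<and> ascent_word (fold swap_pos (take k a) s) (drop k a)"
  using ascent_word_append[of s "take k a" "drop k a"] by simp

definition inversions :: "nat list \<Rightarrow> (nat \<times> nat) set" where
  "inversions t = {(p, q). p \<in> set t \<and> q \<in> set t \<and> q < p \<and> pos t p < pos t q}"

lemma inversions_iff: "(p, q) \<in> inversions t \<longleftrightarrow> p \<in> set t \<and> q \<in> set t \<and> q < p \<and> pos t p < pos t q"
  by (simp add: inversions_def)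

lemma inversions_memD: "e \<in> inversions t \<Longrightarrow> snd e < fst e \<and> fst e \<in> set t \<and> snd e \<in> set t"
  by (auto simp: inversions_def)

lemma inversions_trans: "(y, x) \<in> inversions t \<Longrightarrow> (z, y) \<in> inversions t \<Longrightarrow> (z, x) \<in> inversions t"
  by (auto simp: inversions_def)

lemma finite_inversions: "finite (inversions t)"
proof -
  have "inversions t \<subseteq> set t \<times> set t" by (auto simp: inversions_def)
  thus ?thesis by (rule finite_subset) auto
qed

lemma pos_swap_pos_less:
  assumes t: "distinct t" "1 \<le> c" "c < length t" and pq: "p \<in> set t" "q \<in> set t" "p \<noteq> q"
  shows "pos (swap_pos c t) p < pos (swap_pos c t) q \<longleftrightarrow>
    (if p = t ! c \<and> q = t ! (c - 1) then True
     else if p = t ! (c - 1) \<and> q = t ! c then False else pos t p < pos t q)"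
proof -
  have ps: "\<And>r. r \<in> set t \<Longrightarrow>
      pos (swap_pos c t) r = (if r = t ! (c - 1) then c else if r = t ! c then c - 1 else pos t r)"
    using pos_swap_pos t by blast
  have out: "\<And>r. r \<in> set t \<Longrightarrow> r \<noteq> t ! (c - 1) \<Longrightarrow> r \<noteq> t ! c \<Longrightarrow> pos t r < c - 1 \<or> c < pos t r"
    using pos_outside_swap t by blast
  have "pos t (t ! (c - 1)) = c - 1" "pos t (t ! c) = c" "t ! (c - 1) \<noteq> t ! c"
    using pos_nth[OF t(1)] nth_eq_iff_index_eq[OF t(1)] t by auto
  thus ?thesis using ps[OF pq(1)] ps[OF pq(2)] out[OF pq(1)] out[OF pq(2)] pq(3) t(2) by auto
qed

lemma inversions_swap_pos:
  assumes t: "distinct t" "1 \<le> c" "c < length t"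
  shows "t ! (c - 1) < t ! c \<Longrightarrow> inversions (swap_pos c t) = insert (t ! c, t ! (c - 1)) (inversions t)
           \<and> (t ! c, t ! (c - 1)) \<notin> inversions t"
    and "t ! (c - 1) > t ! c \<Longrightarrow> inversions (swap_pos c t) = inversions t - {(t ! (c - 1), t ! c)}
           \<and> (t ! (c - 1), t ! c) \<in> inversions t"
proof -
  have in_t: "t ! (c - 1) \<in> set t" "t ! c \<in> set t" "set (swap_pos c t) = set t"
    using t set_distinct_swap_pos by auto
  have pos: "pos t (t ! (c - 1)) = c - 1" "pos t (t ! c) = c" using pos_nth[OF t(1)] t by auto
  note less = pos_swap_pos_less[OF t]
  show "t ! (c - 1) < t ! c \<Longrightarrow> inversions (swap_pos c t) = insert (t ! c, t ! (c - 1)) (inversions t)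
           \<and> (t ! c, t ! (c - 1)) \<notin> inversions t"
    using in_t pos less by (auto simp: inversions_def)
  show "t ! (c - 1) > t ! c \<Longrightarrow> inversions (swap_pos c t) = inversions t - {(t ! (c - 1), t ! c)}
           \<and> (t ! (c - 1), t ! c) \<in> inversions t"
    using in_t pos less t(2) by (auto simp: inversions_def split: if_split_asm)
qed

lemma swapped_pairs_inversions:
  assumes "ascent_word s a" "distinct s"
  shows "inversions (fold swap_pos a s) = inversions s \<union> set (swapped_pairs s a) \<and> inversions s \<inter> set (swapped_pairs s a) = {}
         \<and> distinct (swapped_pairs s a)"
  using assms
proof (induction a arbitrary: s)
  case Nil
  then show ?case by simp
next
  case (Cons c a)
  let ?s' = "swap_pos c s"
  have g: "1 \<le> c" "c < length s" "s ! (c - 1) < s ! c" "ascent_word ?s' a" using Cons.prems by auto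
  have d': "distinct ?s'" using set_distinct_swap_pos g Cons.prems by simp
  have IH: "inversions (fold swap_pos a ?s') = inversions ?s' \<union> set (swapped_pairs ?s' a) \<and> inversions ?s' \<inter> set (swapped_pairs ?s' a) = {}
         \<and> distinct (swapped_pairs ?s' a)" using Cons.IH[OF g(4) d'] .
  have sw: "inversions ?s' = insert (s ! c, s ! (c - 1)) (inversions s) \<and> (s ! c, s ! (c - 1)) \<notin> inversions s"
    using inversions_swap_pos(1)[OF Cons.prems(2) g(1,2,3)] .
  show ?case using IH sw by auto
qed

definition letters_in_range :: "nat list \<Rightarrow> nat list \<Rightarrow> bool" where
  "letters_in_range s a \<longleftrightarrow> (\<forall>c \<in> set a. 1 \<le> c \<and> c < length s)"

lemma fold_letters_in_range:
  assumes "letters_in_range s a"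
  shows "length (fold swap_pos a s) = length s \<and> set (fold swap_pos a s) = set s
     \<and> distinct (fold swap_pos a s) = distinct s"
  using assms by (induction a arbitrary: s) (auto simp: set_distinct_swap_pos letters_in_range_def)

lemma inversions_fold_bound:
  assumes "distinct s" "letters_in_range s a"
  shows "card (inversions (fold swap_pos a s)) \<le> card (inversions s) + length a \<and>
    (\<not> ascent_word s a \<longrightarrow> card (inversions (fold swap_pos a s)) < card (inversions s) + length a)"
  using assms
proof (induction a arbitrary: s)
  case Nil
  then show ?case by simp
next
  case (Cons c a)
  let ?s' = "swap_pos c s"
  have g: "1 \<le> c" "c < length s" using Cons.prems by (auto simp: letters_in_range_def)
  have d': "distinct ?s'" using set_distinct_swap_pos g Cons.prems by simp
  have vl': "letters_in_range ?s' a" using Cons.prems by (auto simp: letters_in_range_def)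
  note IH = Cons.IH[OF d' vl']
  have ne: "s ! (c - 1) \<noteq> s ! c" using Cons.prems(1) g nth_eq_iff_index_eq by fastforce
  show ?case
  proof (cases "s ! (c - 1) < s ! c")
    case True
    have "card (inversions ?s') = card (inversions s) + 1"
      using inversions_swap_pos(1)[OF Cons.prems(1) g True] finite_inversions by simp
    then show ?thesis using IH True g by auto
  next
    case False
    hence lt: "s ! (c - 1) > s ! c" using ne by simp
    have "card (inversions ?s') + 1 = card (inversions s)"
      using inversions_swap_pos(2)[OF Cons.prems(1) g lt] finite_inversions
      by (metis card_Diff1_less card_Suc_Diff1 Suc_eq_plus1)
    then show ?thesis using IH lt by auto
  qed
qed

lemma inv_count_eq_card_inversions:
  assumes "distinct t"
  shows "inv_count t = card (inversions t)"
proof -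
  let ?I = "{(i, j). i < j \<and> j < length t \<and> t ! i > t ! j}"
  let ?f = "\<lambda>(i, j). (t ! i, t ! j)"
  have inj: "inj_on ?f ?I"
    using assms by (auto simp: inj_on_def nth_eq_iff_index_eq)
  have img: "?f ` ?I = inversions t"
  proof
    show "?f ` ?I \<subseteq> inversions t"
      using assms by (auto simp: inversions_def pos_nth)
    show "inversions t \<subseteq> ?f ` ?I"
    proof
      fix x assume "x \<in> inversions t"
      then obtain p q where x: "x = (p, q)" "p \<in> set t" "q \<in> set t" "q < p" "pos t p < pos t q"
        by (auto simp: inversions_def)
      have "(pos t p, pos t q) \<in> ?I" using x pos_in[OF assms] by auto
      moreover have "?f (pos t p, pos t q) = x" using x pos_in[OF assms] by auto
      ultimately show "x \<in> ?f ` ?I" by force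
    qed
  qed
  show ?thesis unfolding inv_count_def using card_image[OF inj] img by simp
qed

lemma id_perm_props: "distinct (id_perm n)" "length (id_perm n) = n" "set (id_perm n) = {1..n}"
  by (auto simp: id_perm_def)

lemma pos_id_perm: "p \<in> {1..n} \<Longrightarrow> pos (id_perm n) p = p - 1"
proof -
  assume p: "p \<in> {1..n}"
  have "id_perm n ! (p - 1) = p" using p by (auto simp: id_perm_def nth_upt simp del: upt_Suc)
  thus ?thesis using pos_nth[OF id_perm_props(1), of "p - 1" n] p id_perm_props(2) by auto
qed

lemma inversions_id_perm: "inversions (id_perm n) = {}"
  by (auto simp: inversions_def id_perm_props pos_id_perm)

lemma reduced_word_ascent:
  assumes "a \<in> reduced_words n w"
  shows "ascent_word (id_perm n) a \<and> fold swap_pos a (id_perm n) = w \<and> distinct w \<and> set w = {1..n}"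
proof -
  have a: "set a \<subseteq> {1..n - 1}" "length a = inv_count w" "fold swap_pos a (id_perm n) = w"
    using assms by (auto simp: reduced_words_def act_def)
  have v: "letters_in_range (id_perm n) a" unfolding letters_in_range_def id_perm_props
  proof
    fix c assume "c \<in> set a"
    hence "c \<in> {1..n - 1}" using a(1) by blast
    thus "1 \<le> c \<and> c < n" by auto
  qed
  have fw: "distinct w \<and> set w = {1..n}" using fold_letters_in_range[OF v] a(3) id_perm_props by auto
  \<comment> \<open>Each letter changes the number of inversions by at most one, and there are only as many
    letters as \<open>w\<close> has inversions.\<close>
  have "ascent_word (id_perm n) a"
  proof (rule ccontr)
    assume "\<not> ascent_word (id_perm n) a"
    hence "card (inversions w) < length a" using inversions_fold_bound[OF id_perm_props(1) v] a(3) inversions_id_perm by simp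
    thus False using a(2) inv_count_eq_card_inversions fw by simp
  qed
  thus ?thesis using a fw by simp
qed

lemma ascent_word_from_id:
  assumes "ascent_word (id_perm n) a"
  defines "w \<equiv> fold swap_pos a (id_perm n)"
  shows "distinct (inv_seq n a)" "set (inv_seq n a) = inversions w"
    "distinct w" "set w = {1..n}" "length w = n"
  using swapped_pairs_inversions[OF assms(1) id_perm_props(1)] ascent_word_fold[OF assms(1)] inversions_id_perm id_perm_props
  unfolding w_def by auto

lemma reduced_word_facts:
  assumes "a \<in> reduced_words n w"
  shows "ascent_word (id_perm n) a" "fold swap_pos a (id_perm n) = w" "distinct w" "set w = {1..n}"
    "set (inv_seq n a) = inversions w" "distinct (inv_seq n a)"
  using reduced_word_ascent[OF assms] ascent_word_from_id[of n a] by auto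

lemma pos_less_iff_inversions:
  assumes "distinct t" "p \<in> set t" "q \<in> set t" "p \<noteq> q"
  shows "pos t p < pos t q \<longleftrightarrow> (if q < p then (p, q) \<in> inversions t else (q, p) \<notin> inversions t)"
proof -
  have "pos t p \<noteq> pos t q" using pos_in[OF assms(1)] assms by metis
  thus ?thesis using assms by (auto simp: inversions_iff)
qed

lemma swapped_pairs_inj: "ascent_word s a \<Longrightarrow> ascent_word s b \<Longrightarrow> distinct s \<Longrightarrow> swapped_pairs s a = swapped_pairs s b \<Longrightarrow> a = b"
proof (induction a arbitrary: s b)
  case Nil
  then show ?case by (cases b) auto
next
  case (Cons c a0)
  obtain c' b0 where b: "b = c' # b0" using Cons.prems(4) by (cases b) auto
  have r: "1 \<le> c" "c < length s" "1 \<le> c'" "c' < length s" using Cons.prems(1,2) b by auto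
  have "s ! c = s ! c'" using Cons.prems(4) b by simp
  hence cc: "c = c'" using nth_eq_iff_index_eq[OF Cons.prems(3)] r by blast
  have d': "distinct (swap_pos c s)" using set_distinct_swap_pos r Cons.prems(3) by simp
  have "a0 = b0" using Cons.IH[OF _ _ d', of b0] Cons.prems b cc by simp
  thus ?case using b cc by simp
qed

section \<open>Commutation and braid moves\<close>

definition disjoint_pairs :: "nat \<times> nat \<Rightarrow> nat \<times> nat \<Rightarrow> bool" where
  "disjoint_pairs g h \<longleftrightarrow> {fst g, snd g} \<inter> {fst h, snd h} = {}"

lemma disjoint_pairs_sym: "disjoint_pairs g h \<Longrightarrow> disjoint_pairs h g"
  by (auto simp: disjoint_pairs_def)

lemma commuting_letters:
  assumes d: "distinct s" and r: "1 \<le> i" "i < length s" "1 \<le> j" "j < length s"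
    and ij: "i \<ge> j + 2 \<or> j \<ge> i + 2"
  shows "fold swap_pos [i, j] s = fold swap_pos [j, i] s"
    "swapped_pairs s (i # j # v) = (s ! i, s ! (i - 1)) # (s ! j, s ! (j - 1)) # swapped_pairs (fold swap_pos [i, j] s) v"
    "swapped_pairs s (j # i # v) = (s ! j, s ! (j - 1)) # (s ! i, s ! (i - 1)) # swapped_pairs (fold swap_pos [i, j] s) v"
    "ascent_word s (i # j # v) \<longleftrightarrow> s ! (i - 1) < s ! i \<and> s ! (j - 1) < s ! j \<and> ascent_word (fold swap_pos [i, j] s) v"
    "ascent_word s (j # i # v) \<longleftrightarrow> s ! (i - 1) < s ! i \<and> s ! (j - 1) < s ! j \<and> ascent_word (fold swap_pos [i, j] s) v"
    "disjoint_pairs (s ! i, s ! (i - 1)) (s ! j, s ! (j - 1))"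
proof -
  have c: "swap_pos j (swap_pos i s) = swap_pos i (swap_pos j s)"
    using swap_pos_commute[OF r(1,2) r(3,4)] ij by (metis swap_pos_commute r)
  show "fold swap_pos [i, j] s = fold swap_pos [j, i] s" using c by simp
  have a1: "swap_pos i s ! j = s ! j" "swap_pos i s ! (j - 1) = s ! (j - 1)"
    using r ij by (auto simp: nth_swap_pos)
  have a2: "swap_pos j s ! i = s ! i" "swap_pos j s ! (i - 1) = s ! (i - 1)"
    using r ij by (auto simp: nth_swap_pos)
  show "swapped_pairs s (i # j # v) = (s ! i, s ! (i - 1)) # (s ! j, s ! (j - 1)) # swapped_pairs (fold swap_pos [i, j] s) v"
    using a1 by simp
  show "swapped_pairs s (j # i # v) = (s ! j, s ! (j - 1)) # (s ! i, s ! (i - 1)) # swapped_pairs (fold swap_pos [i, j] s) v"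
    using a2 c by simp
  show "ascent_word s (i # j # v) \<longleftrightarrow> s ! (i - 1) < s ! i \<and> s ! (j - 1) < s ! j \<and> ascent_word (fold swap_pos [i, j] s) v"
    using a1 r by auto
  show "ascent_word s (j # i # v) \<longleftrightarrow> s ! (i - 1) < s ! i \<and> s ! (j - 1) < s ! j \<and> ascent_word (fold swap_pos [i, j] s) v"
    using a2 r c by auto
  have "i \<noteq> j" "i \<noteq> j - 1" "i - 1 \<noteq> j" "i - 1 \<noteq> j - 1" using ij r by auto
  moreover have dn: "\<And>p q. p < length s \<Longrightarrow> q < length s \<Longrightarrow> p \<noteq> q \<Longrightarrow> s ! p \<noteq> s ! q"
    using nth_eq_iff_index_eq[OF d] by blast
  ultimately have "s ! i \<noteq> s ! j" "s ! i \<noteq> s ! (j - 1)" "s ! (i - 1) \<noteq> s ! j" "s ! (i - 1) \<noteq> s ! (j - 1)"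
    using r by (auto intro!: dn)
  thus "disjoint_pairs (s ! i, s ! (i - 1)) (s ! j, s ! (j - 1))" by (auto simp: disjoint_pairs_def)
qed

lemma braid_letters:
  assumes d: "distinct s" and r: "1 \<le> i" "i + 1 < length s"
  defines "\<alpha> \<equiv> s ! (i - 1)" and "\<beta> \<equiv> s ! i" and "\<gamma> \<equiv> s ! (i + 1)"
  shows "fold swap_pos [i, i + 1, i] s = fold swap_pos [i + 1, i, i + 1] s"
    "swapped_pairs s (i # (i + 1) # i # v) = (\<beta>, \<alpha>) # (\<gamma>, \<alpha>) # (\<gamma>, \<beta>) # swapped_pairs (fold swap_pos [i, i + 1, i] s) v"
    "swapped_pairs s ((i + 1) # i # (i + 1) # v) = (\<gamma>, \<beta>) # (\<gamma>, \<alpha>) # (\<beta>, \<alpha>) # swapped_pairs (fold swap_pos [i, i + 1, i] s) v"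
    "ascent_word s (i # (i + 1) # i # v) \<longleftrightarrow> \<alpha> < \<beta> \<and> \<beta> < \<gamma> \<and> ascent_word (fold swap_pos [i, i + 1, i] s) v"
    "ascent_word s ((i + 1) # i # (i + 1) # v) \<longleftrightarrow> \<alpha> < \<beta> \<and> \<beta> < \<gamma> \<and> ascent_word (fold swap_pos [i, i + 1, i] s) v"
proof -
  define s1 where "s1 = swap_pos i s"
  define s2 where "s2 = swap_pos (i + 1) s1"
  define s3 where "s3 = swap_pos i s2"
  define t1 where "t1 = swap_pos (i + 1) s"
  define t2 where "t2 = swap_pos i t1"
  define t3 where "t3 = swap_pos (i + 1) t2"
  have L: "length s1 = length s" "length s2 = length s" "length s3 = length s"
     "length t1 = length s" "length t2 = length s" "length t3 = length s"
    unfolding s1_def s2_def s3_def t1_def t2_def t3_def by simp_all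
  have n1: "\<And>j. j < length s \<Longrightarrow> s1 ! j = (if j = i - 1 then \<beta> else if j = i then \<alpha> else s ! j)"
    unfolding s1_def \<alpha>_def \<beta>_def using r by (simp add: nth_swap_pos)
  have n2: "\<And>j. j < length s \<Longrightarrow> s2 ! j = (if j = i - 1 then \<beta> else if j = i then \<gamma> else if j = i + 1 then \<alpha> else s ! j)"
    unfolding s2_def using r n1 L by (auto simp: nth_swap_pos \<gamma>_def)
  have n3: "\<And>j. j < length s \<Longrightarrow> s3 ! j = (if j = i - 1 then \<gamma> else if j = i then \<beta> else if j = i + 1 then \<alpha> else s ! j)"
    unfolding s3_def using r n2 L by (auto simp: nth_swap_pos \<alpha>_def \<beta>_def \<gamma>_def)
  have m1: "\<And>j. j < length s \<Longrightarrow> t1 ! j = (if j = i then \<gamma> else if j = i + 1 then \<beta> else s ! j)"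
    unfolding t1_def \<gamma>_def \<beta>_def using r by (auto simp: nth_swap_pos)
  have m2: "\<And>j. j < length s \<Longrightarrow> t2 ! j = (if j = i - 1 then \<gamma> else if j = i then \<alpha> else if j = i + 1 then \<beta> else s ! j)"
    unfolding t2_def using r m1 L by (auto simp: nth_swap_pos \<alpha>_def)
  have m3: "\<And>j. j < length s \<Longrightarrow> t3 ! j = (if j = i - 1 then \<gamma> else if j = i then \<beta> else if j = i + 1 then \<alpha> else s ! j)"
    unfolding t3_def using r m2 L by (auto simp: nth_swap_pos \<alpha>_def \<beta>_def \<gamma>_def)
  have eq: "s3 = t3" by (rule nth_equalityI) (use L n3 m3 in auto)
  have f1: "fold swap_pos [i, i + 1, i] s = s3" unfolding s1_def s2_def s3_def by simp
  have f2: "fold swap_pos [i + 1, i, i + 1] s = t3" unfolding t1_def t2_def t3_def by simp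
  show "fold swap_pos [i, i + 1, i] s = fold swap_pos [i + 1, i, i + 1] s" using f1 f2 eq by simp
  have e1: "s1 ! (i + 1) = \<gamma>" "s1 ! i = \<alpha>" "s2 ! i = \<gamma>" "s2 ! (i - 1) = \<beta>"
    using n1 n2 r by (auto simp: \<gamma>_def)
  have e2: "t1 ! i = \<gamma>" "t1 ! (i - 1) = \<alpha>" "t2 ! (i + 1) = \<beta>" "t2 ! i = \<alpha>"
    using m1 m2 r by (auto simp: \<alpha>_def)
  show "swapped_pairs s (i # (i + 1) # i # v) = (\<beta>, \<alpha>) # (\<gamma>, \<alpha>) # (\<gamma>, \<beta>) # swapped_pairs (fold swap_pos [i, i + 1, i] s) v"
    using e1 f1 unfolding \<alpha>_def \<beta>_def s1_def s2_def s3_def by simp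
  show "swapped_pairs s ((i + 1) # i # (i + 1) # v) = (\<gamma>, \<beta>) # (\<gamma>, \<alpha>) # (\<beta>, \<alpha>) # swapped_pairs (fold swap_pos [i, i + 1, i] s) v"
    using e2 f1 f2 eq unfolding \<beta>_def \<gamma>_def t1_def t2_def t3_def by simp
  show "ascent_word s (i # (i + 1) # i # v) \<longleftrightarrow> \<alpha> < \<beta> \<and> \<beta> < \<gamma> \<and> ascent_word (fold swap_pos [i, i + 1, i] s) v"
    using e1 f1 r L unfolding \<alpha>_def \<beta>_def s1_def s2_def s3_def by auto
  show "ascent_word s ((i + 1) # i # (i + 1) # v) \<longleftrightarrow> \<alpha> < \<beta> \<and> \<beta> < \<gamma> \<and> ascent_word (fold swap_pos [i, i + 1, i] s) v"
    using e2 f1 f2 eq r L unfolding \<beta>_def \<gamma>_def t1_def t2_def t3_def by auto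
qed

lemma disjoint_swaps_far_apart:
  assumes r: "1 \<le> c1" "c1 < length s" "1 \<le> c2" "c2 < length s"
    and disj: "disjoint_pairs (s ! c1, s ! (c1 - 1)) (swap_pos c1 s ! c2, swap_pos c1 s ! (c2 - 1))"
  shows "c1 \<ge> c2 + 2 \<or> c2 \<ge> c1 + 2"
proof (rule ccontr)
  assume "\<not> ?thesis"
  hence "c2 = c1 \<or> c2 = c1 + 1 \<or> c1 = c2 + 1" by auto
  moreover have "swap_pos c1 s ! c1 = s ! (c1 - 1)" "swap_pos c1 s ! (c1 - 1) = s ! c1"
    using r by (simp_all add: nth_swap_pos)
  ultimately show False using disj by (auto simp: disjoint_pairs_def)
qed

definition braid_block :: "nat \<Rightarrow> nat \<Rightarrow> nat \<Rightarrow> (nat \<times> nat) list" where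
  "braid_block x y z = [(y, x), (z, x), (z, y)]"

lemma distinct_braid_block: "x < y \<Longrightarrow> y < z \<Longrightarrow> distinct (braid_block x y z)"
  by (auto simp: braid_block_def)

lemma braid_move_swapped_pairs:
  assumes d: "distinct s" and g: "ascent_word s (p @ v)"
    and pq: "(p, q) = ([i, i + 1, i], [i + 1, i, i + 1]) \<or> (p, q) = ([i + 1, i, i + 1], [i, i + 1, i])"
  shows "ascent_word s (q @ v) \<and> fold swap_pos (q @ v) s = fold swap_pos (p @ v) s \<and>
    (\<exists>x y z K. x < y \<and> y < z \<and> (K = braid_block x y z \<or> K = rev (braid_block x y z)) \<and>
      swapped_pairs s (p @ v) = K @ swapped_pairs (fold swap_pos p s) v \<and>
      swapped_pairs s (q @ v) = rev K @ swapped_pairs (fold swap_pos p s) v)"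
proof -
  have r: "1 \<le> i" "i + 1 < length s" using g pq by auto
  note bl = braid_letters[OF d r]
  have asc: "s ! (i - 1) < s ! i" "s ! i < s ! (i + 1)" using g pq bl(4,5) by auto
  from pq show ?thesis
  proof
    assume "(p, q) = ([i, i + 1, i], [i + 1, i, i + 1])"
    thus ?thesis using bl asc g
      by (intro conjI exI[of _ "s ! (i - 1)"] exI[of _ "s ! i"] exI[of _ "s ! (i + 1)"]
          exI[of _ "braid_block (s ! (i - 1)) (s ! i) (s ! (i + 1))"]) (auto simp: braid_block_def)
  next
    assume "(p, q) = ([i + 1, i, i + 1], [i, i + 1, i])"
    thus ?thesis using bl asc g
      by (intro conjI exI[of _ "s ! (i - 1)"] exI[of _ "s ! i"] exI[of _ "s ! (i + 1)"]
          exI[of _ "rev (braid_block (s ! (i - 1)) (s ! i) (s ! (i + 1)))"]) (auto simp: braid_block_def)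
  qed
qed

lemma braid_block_letters:
  assumes d: "distinct s" and g: "ascent_word s (c1 # c2 # c3 # v)" and xyz: "x < y" "y < z"
    and K: "take 3 (swapped_pairs s (c1 # c2 # c3 # v)) \<in> {braid_block x y z, rev (braid_block x y z)}"
  shows "(c2 = c1 + 1 \<and> c3 = c1) \<or> (c1 = c2 + 1 \<and> c3 = c1)"
proof -
  define s1 where "s1 = swap_pos c1 s"
  define s2 where "s2 = swap_pos c2 s1"
  have r: "1 \<le> c1" "c1 < length s" "1 \<le> c2" "c2 < length s" "1 \<le> c3" "c3 < length s"
    using g by auto
  have L: "length s1 = length s" "length s2 = length s" unfolding s1_def s2_def by simp_all
  have d1: "distinct s1" "distinct s2"
    unfolding s2_def s1_def using set_distinct_swap_pos r d by simp_all
  have E: "take 3 (swapped_pairs s (c1 # c2 # c3 # v)) =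
      [(s ! c1, s ! (c1 - 1)), (s1 ! c2, s1 ! (c2 - 1)), (s2 ! c3, s2 ! (c3 - 1))]"
    unfolding s1_def s2_def by (simp add: numeral_3_eq_3)
  have s1: "s1 ! c1 = s ! (c1 - 1)" "s1 ! (c1 - 1) = s ! c1" unfolding s1_def using r by (simp_all add: nth_swap_pos)
  have inj: "\<And>i j t. distinct t \<Longrightarrow> length t = length s \<Longrightarrow> i < length s \<Longrightarrow> j < length s \<Longrightarrow>
      t ! i = t ! j \<Longrightarrow> i = j"
    using nth_eq_iff_index_eq by metis
  from K consider "take 3 (swapped_pairs s (c1 # c2 # c3 # v)) = braid_block x y z"
    | "take 3 (swapped_pairs s (c1 # c2 # c3 # v)) = rev (braid_block x y z)" by blast
  then show ?thesis
  proof cases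
    case 1
    hence e: "s ! c1 = y" "s ! (c1 - 1) = x" "s1 ! c2 = z" "s1 ! (c2 - 1) = x" "s2 ! c3 = z" "s2 ! (c3 - 1) = y"
      using E by (auto simp: braid_block_def)
    have "c2 - 1 = c1" using inj[OF d1(1) L(1), of "c2 - 1" c1] e s1 r by auto
    hence c2: "c2 = c1 + 1" using r by simp
    have "s2 ! (c1 - 1) = s1 ! (c1 - 1)" using r c2 L unfolding s2_def by (auto simp: nth_swap_pos)
    hence "s2 ! (c1 - 1) = y" using e s1 by simp
    hence "c3 - 1 = c1 - 1" using inj[OF d1(2) L(2), of "c3 - 1" "c1 - 1"] e r by auto
    thus ?thesis using c2 r by simp
  next
    case 2
    hence e: "s ! c1 = z" "s ! (c1 - 1) = y" "s1 ! c2 = z" "s1 ! (c2 - 1) = x" "s2 ! c3 = y" "s2 ! (c3 - 1) = x"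
      using E by (auto simp: braid_block_def)
    have c2: "c2 = c1 - 1" using inj[OF d1(1) L(1), of c2 "c1 - 1"] e s1 r by auto
    have "s2 ! c1 = s1 ! c1" using r c2 L unfolding s2_def by (auto simp: nth_swap_pos)
    hence "s2 ! c1 = y" using e s1 by simp
    hence "c3 = c1" using inj[OF d1(2) L(2), of c3 c1] e r by auto
    thus ?thesis using c2 r by simp
  qed
qed

lemma comm_step_Cons: "comm_step a b \<Longrightarrow> comm_step (c # a) (c # b)"
  unfolding comm_step_def by (metis append_Cons)

lemma comm_step_sym: "comm_step a b \<Longrightarrow> comm_step b a"
  unfolding comm_step_def by blast

lemma swapped_pairs_eq_appendE:
  assumes "swapped_pairs s a = pre @ rest"
  obtains u v where "a = u @ v" "swapped_pairs s u = pre" "swapped_pairs (fold swap_pos u s) v = rest"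
proof -
  let ?u = "take (length pre) a" and ?v = "drop (length pre) a"
  have "swapped_pairs s ?u = pre" using assms by (simp add: swapped_pairs_take)
  moreover have "swapped_pairs s a = swapped_pairs s ?u @ swapped_pairs (fold swap_pos ?u s) ?v"
    by (metis append_take_drop_id swapped_pairs_append)
  ultimately show thesis using that[of ?u ?v] assms by simp
qed

lemma comm_step_swapped_pairs:
  assumes g: "ascent_word s a" and d: "distinct s" and c: "comm_step a a'"
  shows "ascent_word s a' \<and> fold swap_pos a' s = fold swap_pos a s \<and>
    (\<exists>pre g h post. swapped_pairs s a = pre @ g # h # post \<and> swapped_pairs s a' = pre @ h # g # post
      \<and> disjoint_pairs g h)"
proof -
  obtain u v i j where ij: "i \<ge> j + 2 \<or> j \<ge> i + 2" and a: "a = u @ [i, j] @ v" and a': "a' = u @ [j, i] @ v"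
    using c unfolding comm_step_def by blast
  define s' where "s' = fold swap_pos u s"
  have gu: "ascent_word s u" "ascent_word s' (i # j # v)"
    using g unfolding a s'_def by (auto simp: ascent_word_append)
  have d': "distinct s'" using ascent_word_fold[OF gu(1)] d unfolding s'_def by simp
  have r: "1 \<le> i" "i < length s'" "1 \<le> j" "j < length s'" using gu(2) by auto
  note cl = commuting_letters[OF d' r ij]
  show ?thesis
    using cl gu unfolding a a' s'_def
    by (auto simp: ascent_word_append swapped_pairs_append intro!: exI[of _ "swapped_pairs s u"])
qed

lemma swapped_pairs_commute_adjacent:
  assumes g: "ascent_word s a" and d: "distinct s"
    and E: "swapped_pairs s a = pre @ g # h # post" and gh: "disjoint_pairs g h"
  shows "\<exists>a'. comm_step a a' \<and> ascent_word s a' \<and> fold swap_pos a' s = fold swap_pos a s \<and>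
    swapped_pairs s a' = pre @ h # g # post"
proof -
  obtain u v where a: "a = u @ v" and Eu: "swapped_pairs s u = pre"
    and Ev: "swapped_pairs (fold swap_pos u s) v = g # h # post"
    using swapped_pairs_eq_appendE[OF E] .
  define s' where "s' = fold swap_pos u s"
  have gu: "ascent_word s u" "ascent_word s' v" using g unfolding a s'_def by (auto simp: ascent_word_append)
  have d': "distinct s'" using ascent_word_fold[OF gu(1)] d unfolding s'_def by simp
  obtain c1 c2 rest where v: "v = c1 # c2 # rest" using Ev by (cases v; cases "tl v") auto
  have r: "1 \<le> c1" "c1 < length s'" "1 \<le> c2" "c2 < length s'" using gu(2) v by auto
  have gh': "g = (s' ! c1, s' ! (c1 - 1))" "h = (swap_pos c1 s' ! c2, swap_pos c1 s' ! (c2 - 1))"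
    using Ev v unfolding s'_def by auto
  have ij: "c1 \<ge> c2 + 2 \<or> c2 \<ge> c1 + 2" using disjoint_swaps_far_apart[OF r] gh gh' by simp
  note cl = commuting_letters[OF d' r ij]
  have "comm_step a (u @ [c2, c1] @ rest)"
    unfolding a v comm_step_def using ij by (intro exI[of _ u] exI[of _ rest]) auto
  moreover have "h = (s' ! c2, s' ! (c2 - 1))" using gh' r ij by (auto simp: nth_swap_pos)
  ultimately show ?thesis
    using cl gu Eu Ev gh' unfolding a v s'_def
    by (intro exI[of _ "u @ [c2, c1] @ rest"]) (auto simp: ascent_word_append swapped_pairs_append)
qed

lemma braid_step_swapped_pairs:
  assumes g: "ascent_word s a" and d: "distinct s" and br: "braid_step a b"
  shows "ascent_word s b \<and> fold swap_pos b s = fold swap_pos a s \<and>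
    (\<exists>pre post x y z K. x < y \<and> y < z \<and> (K = braid_block x y z \<or> K = rev (braid_block x y z)) \<and>
      swapped_pairs s a = pre @ K @ post \<and> swapped_pairs s b = pre @ rev K @ post)"
proof -
  obtain u v i p q where a: "a = u @ p @ v" and b: "b = u @ q @ v"
    and pq: "(p, q) = ([i, i + 1, i], [i + 1, i, i + 1]) \<or> (p, q) = ([i + 1, i, i + 1], [i, i + 1, i])"
    using br unfolding braid_step_def by blast
  define s' where "s' = fold swap_pos u s"
  have gu: "ascent_word s u" "ascent_word s' (p @ v)" using g unfolding a s'_def by (auto simp: ascent_word_append)
  have d': "distinct s'" using ascent_word_fold[OF gu(1)] d unfolding s'_def by simp
  note bm = braid_move_swapped_pairs[OF d' gu(2) pq]
  then obtain x y z K where xyz: "x < y" "y < z" "K = braid_block x y z \<or> K = rev (braid_block x y z)"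
    and E: "swapped_pairs s' (p @ v) = K @ swapped_pairs (fold swap_pos p s') v"
      "swapped_pairs s' (q @ v) = rev K @ swapped_pairs (fold swap_pos p s') v"
    by blast
  have "swapped_pairs s a = swapped_pairs s u @ K @ swapped_pairs (fold swap_pos p s') v"
    "swapped_pairs s b = swapped_pairs s u @ rev K @ swapped_pairs (fold swap_pos p s') v"
    using E unfolding a b s'_def by (simp_all add: swapped_pairs_append)
  moreover have "ascent_word s b" "fold swap_pos b s = fold swap_pos a s"
    using bm gu unfolding a b s'_def by (simp_all add: ascent_word_append)
  ultimately show ?thesis using xyz by blast
qed

lemma braid_block_reverse:
  assumes g: "ascent_word s a" and d: "distinct s" and xyz: "x < y" "y < z"
    and E: "swapped_pairs s a = pre @ K @ post" and K: "K = braid_block x y z \<or> K = rev (braid_block x y z)"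
  shows "\<exists>b. braid_step a b \<and> ascent_word s b \<and> fold swap_pos b s = fold swap_pos a s \<and>
    swapped_pairs s b = pre @ rev K @ post"
proof -
  obtain u v where a: "a = u @ v" and Eu: "swapped_pairs s u = pre"
    and Ev: "swapped_pairs (fold swap_pos u s) v = K @ post"
    using swapped_pairs_eq_appendE[OF E] .
  define s' where "s' = fold swap_pos u s"
  have gu: "ascent_word s u" "ascent_word s' v" using g unfolding a s'_def by (auto simp: ascent_word_append)
  have d': "distinct s'" using ascent_word_fold[OF gu(1)] d unfolding s'_def by simp
  have lK: "length K = 3" using K by (auto simp: braid_block_def)
  obtain c1 c2 c3 rest where v: "v = c1 # c2 # c3 # rest"
    using Ev lK length_swapped_pairs[of s' v] unfolding s'_def
    by (cases v; cases "tl v"; cases "tl (tl v)") auto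
  have "take 3 (swapped_pairs s' v) = K" using Ev lK unfolding s'_def by simp
  hence "(c2 = c1 + 1 \<and> c3 = c1) \<or> (c1 = c2 + 1 \<and> c3 = c1)"
    using braid_block_letters[OF d' gu(2)[unfolded v] xyz] K v by auto
  then obtain i p q where vp: "v = p @ rest"
    and pq: "(p, q) = ([i, i + 1, i], [i + 1, i, i + 1]) \<or> (p, q) = ([i + 1, i, i + 1], [i, i + 1, i])"
  proof (elim disjE conjE)
    assume "c2 = c1 + 1" "c3 = c1"
    thus thesis using that[of "[c1, c1 + 1, c1]" "[c1 + 1, c1, c1 + 1]" c1] v by simp
  next
    assume "c1 = c2 + 1" "c3 = c1"
    thus thesis using that[of "[c2 + 1, c2, c2 + 1]" "[c2, c2 + 1, c2]" c2] v by simp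
  qed
  note bm = braid_move_swapped_pairs[OF d' gu(2)[unfolded vp] pq]
  then obtain x' y' z' K' where K': "K' = braid_block x' y' z' \<or> K' = rev (braid_block x' y' z')"
    "swapped_pairs s' v = K' @ swapped_pairs (fold swap_pos p s') rest"
    "swapped_pairs s' (q @ rest) = rev K' @ swapped_pairs (fold swap_pos p s') rest"
    unfolding vp by blast
  have "length K' = 3" using K'(1) by (auto simp: braid_block_def)
  hence "K' = K" "swapped_pairs (fold swap_pos p s') rest = post"
    using K'(2) Ev lK unfolding s'_def by (auto simp: append_eq_append_conv)
  moreover have "braid_step a (u @ q @ rest)"
    unfolding a vp braid_step_def using pq by (intro exI[of _ u] exI[of _ rest] exI[of _ i]) auto
  ultimately show ?thesis
    using bm K'(3) gu Eu unfolding a vp s'_def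
    by (intro exI[of _ "u @ q @ rest"]) (auto simp: ascent_word_append swapped_pairs_append)
qed

lemma comm_star_Cons: "comm_step\<^sup>*\<^sup>* x y \<Longrightarrow> comm_step\<^sup>*\<^sup>* (c # x) (c # y)"
  by (induction rule: rtranclp_induct) (auto intro: rtranclp.rtrancl_into_rtrancl comm_step_Cons)

lemma comm_star_sym: "comm_step\<^sup>*\<^sup>* x y \<Longrightarrow> comm_step\<^sup>*\<^sup>* y x"
  by (induction rule: rtranclp_induct) (auto intro: converse_rtranclp_into_rtranclp comm_step_sym)

lemma comm_star_swapped_pairs:
  assumes "comm_step\<^sup>*\<^sup>* a a'" "ascent_word s a" "distinct s"
  shows "ascent_word s a' \<and> fold swap_pos a' s = fold swap_pos a s \<and> set (swapped_pairs s a') = set (swapped_pairs s a) \<and>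
    (\<forall>e f. \<not> disjoint_pairs e f \<longrightarrow> (precedes (swapped_pairs s a') e f \<longleftrightarrow> precedes (swapped_pairs s a) e f))"
  using assms(1)
proof (induction rule: rtranclp_induct)
  case base
  then show ?case using assms by simp
next
  case (step y z)
  have gy: "ascent_word s y" using step.IH by simp
  obtain pre g h post where P: "swapped_pairs s y = pre @ g # h # post" "swapped_pairs s z = pre @ h # g # post" "disjoint_pairs g h"
    and gz: "ascent_word s z" and fz: "fold swap_pos z s = fold swap_pos y s"
    using comm_step_swapped_pairs[OF gy assms(3) step.hyps(2)] by blast
  have "\<forall>e f. \<not> disjoint_pairs e f \<longrightarrow> (precedes (swapped_pairs s z) e f \<longleftrightarrow> precedes (swapped_pairs s y) e f)"
  proof (intro allI impI)
    fix e f assume "\<not> disjoint_pairs e f"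
    hence "(e, f) \<noteq> (g, h)" "(e, f) \<noteq> (h, g)" using P(3) disjoint_pairs_sym by blast+
    thus "precedes (swapped_pairs s z) e f \<longleftrightarrow> precedes (swapped_pairs s y) e f" using precedes_swap_adjacent P(1,2) by metis
  qed
  moreover have "set (swapped_pairs s z) = set (swapped_pairs s y)" using P by auto
  ultimately show ?case using step.IH gz fz by simp
qed

lemma bubble_to_front:
  "ascent_word s a \<Longrightarrow> distinct s \<Longrightarrow> swapped_pairs s a = pre @ h # post \<Longrightarrow> (\<forall>g \<in> set pre. disjoint_pairs g h) \<Longrightarrow>
   \<exists>a1. comm_step\<^sup>*\<^sup>* a a1 \<and> ascent_word s a1 \<and> fold swap_pos a1 s = fold swap_pos a s \<and>
        swapped_pairs s a1 = h # pre @ post"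
proof (induction pre arbitrary: post a rule: rev_induct)
  case Nil
  then show ?case by auto
next
  case (snoc g pre)
  have E: "swapped_pairs s a = pre @ g # h # post" using snoc.prems(3) by simp
  obtain a2 where A: "comm_step a a2" "ascent_word s a2" "fold swap_pos a2 s = fold swap_pos a s"
    "swapped_pairs s a2 = pre @ h # g # post"
    using swapped_pairs_commute_adjacent[OF snoc.prems(1,2) E] snoc.prems(4) by auto
  obtain a1 where B: "comm_step\<^sup>*\<^sup>* a2 a1" "ascent_word s a1" "fold swap_pos a1 s = fold swap_pos a2 s"
    "swapped_pairs s a1 = h # pre @ g # post"
    using snoc.IH[OF A(2) snoc.prems(2) A(4)] snoc.prems(4) by auto
  show ?case
  proof (intro exI conjI)
    show "comm_step\<^sup>*\<^sup>* a a1" using A(1) B(1) by (rule converse_rtranclp_into_rtranclp)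
    show "ascent_word s a1" by (rule B(2))
    show "fold swap_pos a1 s = fold swap_pos a s" using A(3) B(3) by simp
    show "swapped_pairs s a1 = h # (pre @ [g]) @ post" using B(4) by simp
  qed
qed

lemma realize_order:
  assumes "ascent_word s a" "distinct s" "distinct ord" "set ord = set (swapped_pairs s a)"
    "\<And>e f. \<not> disjoint_pairs e f \<Longrightarrow> precedes ord e f \<Longrightarrow> precedes (swapped_pairs s a) e f"
  shows "\<exists>a'. comm_step\<^sup>*\<^sup>* a a' \<and> ascent_word s a' \<and> fold swap_pos a' s = fold swap_pos a s \<and>
    swapped_pairs s a' = ord"
  using assms
proof (induction ord arbitrary: a s)
  case Nil
  then show ?case by auto
next
  case (Cons h ord)
  have dE: "distinct (swapped_pairs s a)" using swapped_pairs_inversions[OF Cons.prems(1,2)] by simp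
  obtain pre post where E: "swapped_pairs s a = pre @ h # post"
    using Cons.prems(4) by (metis list.set_intros(1) split_list)
  have "disjoint_pairs g h" if g: "g \<in> set pre" for g
  proof (rule ccontr)
    assume dep: "\<not> disjoint_pairs g h"
    have "g \<noteq> h" using dE E g by auto
    hence "precedes (h # ord) h g" using Cons.prems(4) E g by auto
    hence "precedes (swapped_pairs s a) h g" using Cons.prems(5) dep disjoint_pairs_sym by blast
    moreover have "precedes (swapped_pairs s a) g h" using E g by (simp add: precedes_append)
    ultimately show False using precedes_asym[OF dE] by blast
  qed
  then obtain a1 where a1: "comm_step\<^sup>*\<^sup>* a a1" "ascent_word s a1" "fold swap_pos a1 s = fold swap_pos a s"
    "swapped_pairs s a1 = h # pre @ post"
    using bubble_to_front[OF Cons.prems(1,2) E] by blast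
  obtain c a2 where c: "a1 = c # a2" using a1(4) by (cases a1) auto
  define s' where "s' = swap_pos c s"
  have g': "1 \<le> c" "c < length s" "ascent_word s' a2" and h: "h = (s ! c, s ! (c - 1))"
    and E2: "swapped_pairs s' a2 = pre @ post"
    using a1(2,4) unfolding c s'_def by auto
  have d': "distinct s'" using set_distinct_swap_pos g' Cons.prems(2) unfolding s'_def by simp
  have "h \<notin> set (pre @ post)" using dE E by auto
  hence "set ord = set (swapped_pairs s' a2)" using Cons.prems(3,4) E E2 by auto
  moreover have "precedes (swapped_pairs s' a2) e f"
    if dep: "\<not> disjoint_pairs e f" and l: "precedes ord e f" for e f
  proof -
    have "e \<noteq> h" using l Cons.prems(3) precedes_set by fastforce
    have "precedes (swapped_pairs s a) e f" using Cons.prems(5) dep l by simp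
    hence "precedes (swapped_pairs s a1) e f"
      using comm_star_swapped_pairs[OF a1(1) Cons.prems(1,2)] dep by blast
    thus ?thesis using \<open>e \<noteq> h\<close> a1(4) E2 by simp
  qed
  ultimately obtain a3 where a3: "comm_step\<^sup>*\<^sup>* a2 a3" "ascent_word s' a3"
    "fold swap_pos a3 s' = fold swap_pos a2 s'" "swapped_pairs s' a3 = ord"
    using Cons.IH[OF g'(3) d'] Cons.prems(3) by auto
  show ?case
  proof (intro exI conjI)
    show "comm_step\<^sup>*\<^sup>* a (c # a3)" using a1(1) comm_star_Cons[OF a3(1), of c] c by simp
    show "ascent_word s (c # a3)" using a1(2) a3(2) unfolding c s'_def by simp
    show "fold swap_pos (c # a3) s = fold swap_pos a s" using a1(3) a3(3) unfolding c s'_def by simp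
    show "swapped_pairs s (c # a3) = h # ord" using a3(4) h unfolding s'_def by simp
  qed
qed

lemma comm_star_if_dependent_order_agrees:
  assumes a: "ascent_word s a" and b: "ascent_word s b" and s: "distinct s"
    and same_set: "set (swapped_pairs s b) = set (swapped_pairs s a)"
    and agree: "\<And>e f. \<not> disjoint_pairs e f \<Longrightarrow> precedes (swapped_pairs s b) e f \<Longrightarrow>
      precedes (swapped_pairs s a) e f"
  shows "comm_step\<^sup>*\<^sup>* a b"
proof -
  have "distinct (swapped_pairs s b)" using swapped_pairs_inversions[OF b s] by simp
  then obtain a' where "comm_step\<^sup>*\<^sup>* a a'" "ascent_word s a'" "swapped_pairs s a' = swapped_pairs s b"
    using realize_order[OF a s _ same_set agree] by blast
  thus ?thesis using swapped_pairs_inj[OF _ b s] by blast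
qed

section \<open>Triples of values\<close>

lemma swap_step_order:
  assumes g: "ascent_word (id_perm n) a" and k: "k < length a"
    and Ek: "inv_seq n a ! k = (v, u)" and r: "r \<in> {1..n}" "r \<noteq> u" "r \<noteq> v"
  defines "E \<equiv> inv_seq n a"
  shows "u < v \<and> ((if u < r then precedes E (r, u) (v, u) else \<not> precedes E (u, r) (v, u)) \<longleftrightarrow>
               (if v < r then precedes E (r, v) (v, u) else \<not> precedes E (v, r) (v, u)))"
proof -
  define t where "t = fold swap_pos (take k a) (id_perm n)"
  define c where "c = a ! k"
  have gt: "ascent_word (id_perm n) (take k a)" and gd: "ascent_word t (drop k a)"
    using ascent_word_take_drop[OF g] unfolding t_def by auto
  have dk: "drop k a = c # drop (Suc k) a" using k unfolding c_def by (simp add: Cons_nth_drop_Suc)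
  have cg: "1 \<le> c" "c < length t" "t ! (c - 1) < t ! c" using gd dk by auto
  have tp: "distinct t" "set t = {1..n}" using ascent_word_from_id[OF gt] unfolding t_def by auto
  have uv: "v = t ! c" "u = t ! (c - 1)" using swapped_pairs_nth[OF k, of "id_perm n"] Ek unfolding t_def c_def by auto
  have ult: "u < v" using uv cg by simp
  have pu: "pos t u = c - 1" "pos t v = c" using uv pos_nth tp cg by auto
  have rin: "r \<in> set t" using r tp by simp
  have adj: "pos t r < pos t u \<longleftrightarrow> pos t r < pos t v"
    using pos_outside_swap[OF tp(1) cg(1,2) rin] r uv pu by auto
  have S: "inversions t = set (take k E)"
    using ascent_word_from_id(2)[OF gt] swapped_pairs_take unfolding t_def E_def by simp
  have dE: "distinct E" using ascent_word_from_id(1)[OF g] unfolding E_def .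
  have kE: "k < length E" using k unfolding E_def by simp
  have mem: "\<And>e. e \<in> inversions t \<longleftrightarrow> precedes E e (v, u)"
    using S precedes_take[OF dE kE] Ek unfolding E_def by simp
  have uin: "u \<in> set t" "v \<in> set t" using uv cg by auto
  have i1: "pos t r < pos t u \<longleftrightarrow> (if u < r then precedes E (r, u) (v, u) else \<not> precedes E (u, r) (v, u))"
    using pos_less_iff_inversions[OF tp(1) rin uin(1) r(2)] mem by simp
  have i2: "pos t r < pos t v \<longleftrightarrow> (if v < r then precedes E (r, v) (v, u) else \<not> precedes E (v, r) (v, u))"
    using pos_less_iff_inversions[OF tp(1) rin uin(2) r(3)] mem by simp
  show ?thesis using ult adj i1 i2 by simp
qed

lemma triple_zx_order:
  assumes g: "ascent_word (id_perm n) a" and xyz: "x < y" "y < z" "y \<in> {1..n}"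
  defines "E \<equiv> inv_seq n a"
  shows "(z, x) \<in> set E \<Longrightarrow> precedes E (y, x) (z, x) \<longleftrightarrow> \<not> precedes E (z, y) (z, x)"
proof -
  assume zx: "(z, x) \<in> set E"
  then obtain k where k: "k < length E" "E ! k = (z, x)" by (auto simp: in_set_conv_nth)
  show ?thesis using swap_step_order[OF g, of k z x y] k xyz unfolding E_def by auto
qed

definition triple_pairs :: "nat \<Rightarrow> nat \<Rightarrow> nat \<Rightarrow> (nat \<times> nat) set" where
  "triple_pairs x y z = {(y, x), (z, x), (z, y)}"

lemma set_braid_block: "set (braid_block x y z) = triple_pairs x y z"
  by (auto simp: braid_block_def triple_pairs_def)

lemma triple_of_pairs:
  "x < y \<Longrightarrow> y < z \<Longrightarrow> x' < y' \<Longrightarrow> y' < z' \<Longrightarrow> (z', y') \<in> triple_pairs x y z \<Longrightarrow> (y', x') \<in> triple_pairs x y z \<Longrightarrow>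
   (x', y', z') = (x, y, z)"
  by (auto simp: triple_pairs_def)

lemma dependent_pairs_triple:
  assumes "snd e < fst e" "snd f < fst f" "e \<noteq> f" "\<not> disjoint_pairs e f"
  shows "\<exists>x y z. x < y \<and> y < z \<and> e \<in> triple_pairs x y z \<and> f \<in> triple_pairs x y z"
proof -
  obtain p1 q1 p2 q2 where e: "e = (p1, q1)" and f: "f = (p2, q2)" by (cases e, cases f)
  have lt: "q1 < p1" "q2 < p2" using assms(1,2) e f by auto
  consider "p1 = p2" "q1 < q2" | "p1 = p2" "q2 < q1" | "q1 = q2" "p1 < p2" | "q1 = q2" "p2 < p1"
    | "p1 = q2" | "q1 = p2"
    using assms(3,4) e f by (auto simp: disjoint_pairs_def) linarith+
  then show ?thesis
    using lt unfolding e f triple_pairs_def by cases blast+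
qed

definition triple_block :: "nat \<Rightarrow> nat \<Rightarrow> nat \<Rightarrow> bool \<Rightarrow> (nat \<times> nat) list" where
  "triple_block x y z b = (if b then rev (braid_block x y z) else braid_block x y z)"

definition gamma_of :: "(nat \<times> nat) list \<Rightarrow> nat \<times> nat \<times> nat \<Rightarrow> bool" where
  "gamma_of E T = (case T of (x, y, z) \<Rightarrow> precedes E (z, y) (y, x))"

lemma set_triple_block: "set (triple_block x y z b) = triple_pairs x y z"
  by (auto simp: triple_block_def braid_block_def triple_pairs_def)

lemma triple_order:
  assumes g: "ascent_word (id_perm n) a" and xyz: "x < y" "y < z" "y \<in> {1..n}"
    and ef: "e \<in> set (inv_seq n a) \<inter> triple_pairs x y z" "f \<in> set (inv_seq n a) \<inter> triple_pairs x y z"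
  shows "precedes (inv_seq n a) e f \<longleftrightarrow>
    precedes (triple_block x y z (precedes (inv_seq n a) (z, y) (z, x))) e f"
proof -
  define E where "E = inv_seq n a"
  define b where "b = precedes E (z, y) (z, x)"
  have dE: "distinct E" using ascent_word_from_id(1)[OF g] unfolding E_def .
  have dK: "distinct (triple_block x y z b)"
    using xyz by (auto simp: triple_block_def braid_block_def)
  have trans: "(z, x) \<in> set E" if "(y, x) \<in> set E" "(z, y) \<in> set E"
    using that ascent_word_from_id(2)[OF g] inversions_trans unfolding E_def by metis
  have zx: "precedes E (y, x) (z, x) \<longleftrightarrow> \<not> b" if "(z, x) \<in> set E"
    using triple_zx_order[OF g xyz] that unfolding E_def b_def by blast
  have "precedes E e f" if "e \<in> set E" "f \<in> set E" "precedes (triple_block x y z b) e f" for e f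
  proof (cases b)
    case True
    hence "precedes E (z, y) (z, x)" unfolding b_def .
    moreover have "precedes E (z, x) (y, x)" if "(y, x) \<in> set E"
      using zx precedes_total[OF that] True precedes_set[OF \<open>precedes E (z, y) (z, x)\<close>] xyz by auto
    ultimately show ?thesis
      using that True precedes_trans[OF dE] xyz by (auto simp: triple_block_def braid_block_def)
  next
    case False
    have "precedes E (y, x) (z, x)" if "(y, x) \<in> set E" "(z, x) \<in> set E"
      using zx that False by blast
    moreover have "precedes E (z, x) (z, y)" if "(z, y) \<in> set E" "(z, x) \<in> set E"
      using precedes_total[OF that(2,1)] False xyz unfolding b_def by auto
    ultimately show ?thesis
      using that False trans precedes_trans[OF dE] xyz by (auto simp: triple_block_def braid_block_def)
  qed
  thus ?thesis
    using precedes_eq_if_consistent[OF dE dK] ef set_triple_block unfolding E_def[symmetric] b_def[symmetric] by blast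
qed

lemma state_eq_fold: "state n a k = fold swap_pos (take k a) (id_perm n)"
  by (simp add: state_def act_def)

lemma P_idx_swapped_pairs:
  assumes g: "ascent_word (id_perm n) a" and k: "k < length a" and Ek: "inv_seq n a ! k = (p, q)"
  shows "P_idx n a p q = Suc k"
proof -
  define E where "E = inv_seq n a"
  have dE: "distinct E" using ascent_word_from_id(1)[OF g] unfolding E_def .
  have inv: "\<And>j. j < length a \<Longrightarrow> snd (E ! j) < fst (E ! j)"
    using ascent_word_from_id(2)[OF g] inversions_memD unfolding E_def by (metis length_swapped_pairs nth_mem)
  have st: "\<And>j. j < length a \<Longrightarrow>
     {state n a j ! (a ! j - 1), state n a j ! (a ! j)} = {snd (E ! j), fst (E ! j)}"
    using swapped_pairs_nth unfolding E_def state_eq_fold by (metis fst_conv snd_conv)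
  show ?thesis unfolding P_idx_def
  proof (rule the_equality)
    show "1 \<le> Suc k \<and> Suc k \<le> length a \<and>
      {state n a (Suc k - 1) ! (a ! (Suc k - 1) - 1), state n a (Suc k - 1) ! (a ! (Suc k - 1))} = {p, q}"
      using st[OF k] k Ek unfolding E_def by auto
  next
    fix j assume j: "1 \<le> j \<and> j \<le> length a \<and>
      {state n a (j - 1) ! (a ! (j - 1) - 1), state n a (j - 1) ! (a ! (j - 1))} = {p, q}"
    hence jl: "j - 1 < length a" by auto
    have s: "{snd (E ! (j - 1)), fst (E ! (j - 1))} = {p, q}" using st[OF jl] j by simp
    have "q < p" using inv[OF k] Ek unfolding E_def by simp
    hence "E ! (j - 1) = (p, q)" using s inv[OF jl]
      by (cases "E ! (j - 1)") (auto simp: doubleton_eq_iff)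
    hence "E ! (j - 1) = E ! k" using Ek unfolding E_def by simp
    hence "j - 1 = k" using nth_eq_iff_index_eq[OF dE] jl k unfolding E_def by simp
    thus "j = Suc k" using j by (cases j) auto
  qed
qed

lemma T_set_iff:
  assumes "distinct w"
  shows "(x, y, z) \<in> T_set w \<longleftrightarrow> x < y \<and> y < z \<and> (y, x) \<in> inversions w \<and> (z, y) \<in> inversions w"
  by (auto simp: T_set_def inversions_def)

lemma finite_T_set: "finite (T_set w)"
proof -
  have "T_set w \<subseteq> set w \<times> set w \<times> set w" by (auto simp: T_set_def)
  thus ?thesis by (rule finite_subset) auto
qed

lemma Gamma_le_1: "Gamma n a T \<le> 1"
  by (cases T) (auto simp: Gamma_def)

lemma t_count_eq_card:
  "t_count n w a b = card {xyz \<in> T_set w. Gamma n a xyz \<noteq> Gamma n b xyz}"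
proof -
  have "t_count n w a b = (\<Sum>xyz \<in> T_set w. if Gamma n a xyz \<noteq> Gamma n b xyz then 1 else 0)"
    unfolding t_count_def
  proof (rule sum.cong)
    fix T
    have "Gamma n a T \<le> 1" "Gamma n b T \<le> 1" by (rule Gamma_le_1)+
    thus "(Gamma n a T + Gamma n b T) mod 2 = (if Gamma n a T \<noteq> Gamma n b T then 1 else 0)"
      by (cases "Gamma n a T"; cases "Gamma n b T") auto
  qed simp
  also have "\<dots> = card (T_set w \<inter> {xyz. Gamma n a xyz \<noteq> Gamma n b xyz})"
    using finite_T_set by (simp add: sum.If_cases)
  also have "T_set w \<inter> {xyz. Gamma n a xyz \<noteq> Gamma n b xyz} = {xyz \<in> T_set w. Gamma n a xyz \<noteq> Gamma n b xyz}"
    by blast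
  finally show ?thesis .
qed

lemma Gamma_eq_gamma_of:
  assumes a: "a \<in> reduced_words n w" and T: "(x, y, z) \<in> T_set w"
  shows "Gamma n a (x, y, z) = (if precedes (inv_seq n a) (z, y) (y, x) then 1 else 0)"
proof -
  define E where "E = inv_seq n a"
  have r: "ascent_word (id_perm n) a" "fold swap_pos a (id_perm n) = w" "distinct w" using reduced_word_ascent[OF a] by auto
  have sE: "set E = inversions w" using ascent_word_from_id(2)[OF r(1)] r(2) unfolding E_def by simp
  have dE: "distinct E" using ascent_word_from_id(1)[OF r(1)] unfolding E_def .
  have m: "(y, x) \<in> set E" "(z, y) \<in> set E" using T_set_iff[OF r(3)] T sE by auto
  obtain k1 where k1: "k1 < length E" "E ! k1 = (y, x)" using m(1) by (auto simp: in_set_conv_nth)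
  obtain k2 where k2: "k2 < length E" "E ! k2 = (z, y)" using m(2) by (auto simp: in_set_conv_nth)
  have p1: "P_idx n a y x = Suc k1" using P_idx_swapped_pairs[OF r(1)] k1 unfolding E_def by simp
  have p2: "P_idx n a z y = Suc k2" using P_idx_swapped_pairs[OF r(1)] k2 unfolding E_def by simp
  have "precedes E (z, y) (y, x) \<longleftrightarrow> k2 < k1" using precedes_nth[OF dE k2(1) k1(1)] k1 k2 by simp
  thus ?thesis unfolding Gamma_def using p1 p2 unfolding E_def by simp
qed

lemma Gamma_differ_eq:
  assumes "a \<in> reduced_words n w" "b \<in> reduced_words n w"
  shows "{T \<in> T_set w. Gamma n a T \<noteq> Gamma n b T} =
    {T \<in> T_set w. gamma_of (inv_seq n a) T \<noteq> gamma_of (inv_seq n b) T}"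
  using Gamma_eq_gamma_of[OF assms(1)] Gamma_eq_gamma_of[OF assms(2)] by (auto simp: gamma_of_def split: if_splits)

lemma comm_star_gamma_of:
  assumes "comm_step\<^sup>*\<^sup>* a a'" "ascent_word (id_perm n) a"
  shows "gamma_of (inv_seq n a') T = gamma_of (inv_seq n a) T"
proof -
  obtain x y z where T: "T = (x, y, z)" by (cases T)
  have "\<not> disjoint_pairs (z, y) (y, x)" by (auto simp: disjoint_pairs_def)
  thus ?thesis using comm_star_swapped_pairs[OF assms id_perm_props(1)] T by (simp add: gamma_of_def)
qed

lemma T_set_reduced_word:
  assumes a: "a \<in> reduced_words n w" and T: "(x, y, z) \<in> T_set w"
  shows "x < y" "y < z" "y \<in> {1..n}" "triple_pairs x y z \<subseteq> set (inv_seq n a)"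
proof -
  note ra = reduced_word_facts[OF a]
  have xyz: "x < y" "y < z" "(y, x) \<in> inversions w" "(z, y) \<in> inversions w"
    using T_set_iff[OF ra(3)] T by auto
  show "x < y" "y < z" using xyz by auto
  show "y \<in> {1..n}" using inversions_memD[OF xyz(3)] ra(4) by auto
  show "triple_pairs x y z \<subseteq> set (inv_seq n a)"
    using xyz inversions_trans[OF xyz(3,4)] ra(5) by (auto simp: triple_pairs_def)
qed

lemma gamma_of_eq_triple_bit:
  assumes g: "ascent_word (id_perm n) a" and xyz: "x < y" "y < z" "y \<in> {1..n}"
    and m: "(y, x) \<in> set (inv_seq n a)" "(z, y) \<in> set (inv_seq n a)"
  shows "gamma_of (inv_seq n a) (x, y, z) \<longleftrightarrow> precedes (inv_seq n a) (z, y) (z, x)"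
  using triple_order[OF g xyz, of "(z, y)" "(y, x)"] m xyz
  by (auto simp: gamma_of_def triple_block_def braid_block_def triple_pairs_def)

lemma triple_order_gamma:
  assumes a: "a \<in> reduced_words n w" and T: "(x, y, z) \<in> T_set w"
    and ef: "e \<in> triple_pairs x y z" "f \<in> triple_pairs x y z"
  shows "precedes (inv_seq n a) e f \<longleftrightarrow>
    precedes (triple_block x y z (gamma_of (inv_seq n a) (x, y, z))) e f"
proof -
  note ra = reduced_word_facts[OF a] and xyz = T_set_reduced_word[OF a T]
  have "(y, x) \<in> set (inv_seq n a)" "(z, y) \<in> set (inv_seq n a)" using xyz(4) by (auto simp: triple_pairs_def)
  thus ?thesis using triple_order[OF ra(1) xyz(1-3), of e f] gamma_of_eq_triple_bit[OF ra(1) xyz(1-3)] ef xyz(4)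
    by auto
qed

lemma dependent_order_compare:
  assumes a: "a \<in> reduced_words n w" and b: "b \<in> reduced_words n w"
    and ef: "e \<in> inversions w" "f \<in> inversions w" "e \<noteq> f" "\<not> disjoint_pairs e f"
    and differ: "precedes (inv_seq n a) e f \<noteq> precedes (inv_seq n b) e f"
  shows "\<exists>x y z. e \<in> triple_pairs x y z \<and> f \<in> triple_pairs x y z \<and> (x, y, z) \<in> T_set w \<and>
    gamma_of (inv_seq n a) (x, y, z) \<noteq> gamma_of (inv_seq n b) (x, y, z)"
proof -
  note ra = reduced_word_facts[OF a] and rb = reduced_word_facts[OF b]
  obtain x y z where xyz: "x < y" "y < z" "e \<in> triple_pairs x y z" "f \<in> triple_pairs x y z"
  proof -
    have "snd e < fst e" "snd f < fst f" using ef inversions_memD by auto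
    from dependent_pairs_triple[OF this ef(3,4)] show ?thesis using that by blast
  qed
  have y: "y \<in> {1..n}"
  proof -
    have "(y, x) \<in> {e, f} \<or> (z, y) \<in> {e, f}" using xyz ef(3) by (auto simp: triple_pairs_def)
    hence "y \<in> set w" using inversions_memD ef(1,2) by auto
    thus ?thesis using ra(4) by simp
  qed
  define Ea Eb where "Ea = inv_seq n a" and "Eb = inv_seq n b"
  have "precedes (triple_block x y z (precedes Ea (z, y) (z, x))) e f \<noteq>
      precedes (triple_block x y z (precedes Eb (z, y) (z, x))) e f"
    using triple_order[OF ra(1) xyz(1,2) y, of e f] triple_order[OF rb(1) xyz(1,2) y, of e f]
      differ ef(1,2) xyz(3,4) ra(5) rb(5) unfolding Ea_def Eb_def by auto
  hence bits: "precedes Ea (z, y) (z, x) \<noteq> precedes Eb (z, y) (z, x)" by (rule contrapos_nn) simp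
  hence zy: "(z, y) \<in> set Ea" "(z, x) \<in> set Ea"
    using precedes_set[of Ea "(z, y)" "(z, x)"] precedes_set[of Eb "(z, y)" "(z, x)"] ra(5) rb(5)
    unfolding Ea_def Eb_def by auto
  have yx: "(y, x) \<in> set Ea"
  proof (rule ccontr)
    assume "(y, x) \<notin> set Ea"
    hence "\<not> precedes Ea (y, x) (z, x)" "\<not> precedes Eb (y, x) (z, x)"
      using precedes_set ra(5) rb(5) unfolding Ea_def Eb_def by metis+
    thus False using bits zy triple_zx_order[OF ra(1) xyz(1,2) y] triple_zx_order[OF rb(1) xyz(1,2) y]
      ra(5) rb(5) unfolding Ea_def Eb_def by auto
  qed
  have "(x, y, z) \<in> T_set w" using T_set_iff[OF ra(3)] xyz(1,2) yx zy ra(5) unfolding Ea_def by auto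
  moreover have "gamma_of Ea (x, y, z) \<noteq> gamma_of Eb (x, y, z)"
    using bits gamma_of_eq_triple_bit[OF ra(1) xyz(1,2) y] gamma_of_eq_triple_bit[OF rb(1) xyz(1,2) y]
      yx zy ra(5) rb(5) unfolding Ea_def Eb_def by auto
  ultimately show ?thesis using xyz unfolding Ea_def Eb_def by blast
qed

section \<open>Moving a convex block\<close>

lemma reversed_block_convex:
  assumes dE: "distinct E" and dE': "distinct E'"
    and outside: "\<And>e f. dep e f \<Longrightarrow> \<not> (e \<in> P \<and> f \<in> P) \<Longrightarrow> precedes E e f \<longleftrightarrow> precedes E' e f"
    and inside: "\<And>e f. e \<in> P \<Longrightarrow> f \<in> P \<Longrightarrow> e \<noteq> f \<Longrightarrow> precedes E e f \<longleftrightarrow> precedes E' f e"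
    and t: "t \<in> P" "g \<notin> P" "dep t g" "precedes E t g"
    and path: "(\<lambda>u v. dep u v \<and> precedes E u v \<and> u \<notin> P \<and> v \<notin> P)\<^sup>*\<^sup>* g h"
    and e: "e \<in> P" "dep h e" "precedes E h e"
  shows False
proof -
  have chain: "h \<notin> P \<and> (g = h \<or> (precedes E g h \<and> precedes E' g h))"
    using path
  proof (induction rule: rtranclp_induct)
    case (step u v)
    hence "precedes E' u v" using outside by blast
    thus ?case using step precedes_trans[OF dE] precedes_trans[OF dE'] by blast
  qed (use t in simp)
  have "precedes E t h" "precedes E' t h"
    using chain t outside precedes_trans[OF dE] precedes_trans[OF dE'] by blast+
  moreover have "precedes E' h e" using e chain outside by blast
  ultimately have te: "precedes E t e" "precedes E' t e"
    using e precedes_trans[OF dE] precedes_trans[OF dE'] by blast+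
  have "t \<noteq> e" using te(1) precedes_irrefl[OF dE] by metis
  thus False using inside[OF t(1) e(1)] te precedes_asym[OF dE'] by blast
qed

lemma convex_block_reorder:
  assumes dE: "distinct E" and dK: "distinct K" and KE: "set K \<subseteq> set E"
    and K_order: "\<And>e f. e \<in> set K \<Longrightarrow> f \<in> set K \<Longrightarrow> precedes K e f \<longleftrightarrow> precedes E e f"
    and dep_sym: "\<And>e f. dep e f \<Longrightarrow> dep f e"
    and convex: "\<And>t g h e. t \<in> set K \<Longrightarrow> g \<notin> set K \<Longrightarrow> dep t g \<Longrightarrow> precedes E t g \<Longrightarrow>
      (\<lambda>u v. dep u v \<and> precedes E u v \<and> u \<notin> set K \<and> v \<notin> set K)\<^sup>*\<^sup>* g h \<Longrightarrow>
      e \<in> set K \<Longrightarrow> dep h e \<Longrightarrow> precedes E h e \<Longrightarrow> False"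
  shows "\<exists>L U. distinct (L @ K @ U) \<and> set (L @ K @ U) = set E \<and>
    (\<forall>e f. dep e f \<longrightarrow> precedes (L @ K @ U) e f \<longleftrightarrow> precedes E e f)"
proof -
  let ?P = "set K"
  \<comment> \<open>\<open>U\<close> collects everything a dependency path can reach after leaving \<open>K\<close>; it goes after
    the block, all other elements before it, and convexity says no path from \<open>U\<close> returns to \<open>K\<close>.\<close>
  define Q where "Q = (\<lambda>u v. dep u v \<and> precedes E u v \<and> u \<notin> ?P \<and> v \<notin> ?P)"
  define U where "U = {h. h \<notin> ?P \<and> (\<exists>t \<in> ?P. \<exists>g. g \<notin> ?P \<and> dep t g \<and> precedes E t g \<and> Q\<^sup>*\<^sup>* g h)}"
  define L where "L = filter (\<lambda>e. e \<notin> ?P \<and> e \<notin> U) E"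
  define Ul where "Ul = filter (\<lambda>e. e \<in> U) E"
  have dist: "distinct (L @ K @ Ul)" unfolding L_def Ul_def U_def using dE dK by auto
  have set_eq: "set (L @ K @ Ul) = set E" unfolding L_def Ul_def using KE by auto
  have sound: "precedes E e f" if dep: "dep e f" and l: "precedes (L @ K @ Ul) e f" for e f
  proof (rule ccontr)
    assume nl: "\<not> precedes E e f"
    have "e \<noteq> f" using l precedes_irrefl[OF dist] by metis
    moreover have "e \<in> set E" "f \<in> set E" using precedes_set[OF l] set_eq by auto
    ultimately have fe: "precedes E f e" using nl precedes_total[of e E f] by blast
    have dfe: "dep f e" using dep dep_sym by blast
    consider "precedes L e f" | "precedes K e f" | "precedes Ul e f"
      | "e \<in> set L" "f \<in> ?P" | "e \<in> set L" "f \<in> set Ul" | "e \<in> ?P" "f \<in> set Ul"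
      using l by (auto simp: precedes_append)
    then show False
    proof cases
      case 1
      then show False using nl by (simp add: L_def precedes_filter)
    next
      case 2
      then show False using nl K_order precedes_set by metis
    next
      case 3
      then show False using nl by (simp add: Ul_def precedes_filter)
    next
      case 4
      hence "e \<in> U" using fe dfe unfolding U_def L_def by auto
      then show False using 4 by (simp add: L_def)
    next
      case 5
      then obtain t g where "t \<in> ?P" "g \<notin> ?P" "dep t g" "precedes E t g" "Q\<^sup>*\<^sup>* g f" "f \<notin> ?P"
        unfolding Ul_def U_def by auto
      moreover have "Q f e" using 5 fe dfe \<open>f \<notin> ?P\<close> unfolding Q_def L_def by auto
      ultimately have "e \<in> U" using 5 unfolding U_def L_def
        by (auto intro: rtranclp.rtrancl_into_rtrancl)
      then show False using 5 by (simp add: L_def)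
    next
      case 6
      then obtain t g where "t \<in> ?P" "g \<notin> ?P" "dep t g" "precedes E t g" "Q\<^sup>*\<^sup>* g f"
        unfolding Ul_def U_def by auto
      then show False using convex 6(1) dfe fe unfolding Q_def by blast
    qed
  qed
  have complete: "precedes (L @ K @ Ul) e f" if dep: "dep e f" and l: "precedes E e f" for e f
  proof (rule ccontr)
    assume nl: "\<not> precedes (L @ K @ Ul) e f"
    have "e \<noteq> f" using l precedes_irrefl[OF dE] by metis
    moreover have "e \<in> set (L @ K @ Ul)" "f \<in> set (L @ K @ Ul)" using precedes_set[OF l] set_eq by auto
    ultimately have "precedes (L @ K @ Ul) f e" using nl precedes_total[of e "L @ K @ Ul" f] by blast
    hence "precedes E f e" using sound dep_sym[OF dep] by blast
    thus False using l precedes_asym[OF dE] by blast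
  qed
  show ?thesis using dist set_eq sound complete by blast
qed

lemma reversed_block_reorder:
  assumes dE: "distinct E" and dE': "distinct E'" and dK: "distinct K" and KE: "set K \<subseteq> set E"
    and K_order: "\<And>e f. e \<in> set K \<Longrightarrow> f \<in> set K \<Longrightarrow> precedes K e f \<longleftrightarrow> precedes E e f"
    and dep_sym: "\<And>e f. dep e f \<Longrightarrow> dep f e"
    and outside: "\<And>e f. dep e f \<Longrightarrow> \<not> (e \<in> set K \<and> f \<in> set K) \<Longrightarrow> precedes E e f \<longleftrightarrow> precedes E' e f"
    and inside: "\<And>e f. e \<in> set K \<Longrightarrow> f \<in> set K \<Longrightarrow> e \<noteq> f \<Longrightarrow> precedes E e f \<longleftrightarrow> precedes E' f e"
  shows "\<exists>L U. distinct (L @ K @ U) \<and> set (L @ K @ U) = set E \<and>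
    (\<forall>e f. dep e f \<longrightarrow> precedes (L @ K @ U) e f \<longleftrightarrow> precedes E e f) \<and>
    (\<forall>e f. dep e f \<longrightarrow> precedes (L @ rev K @ U) e f \<longleftrightarrow> precedes E' e f)"
proof -
  have convex: False
    if "t \<in> set K" "g \<notin> set K" "dep t g" "precedes E t g"
      "(\<lambda>u v. dep u v \<and> precedes E u v \<and> u \<notin> set K \<and> v \<notin> set K)\<^sup>*\<^sup>* g h"
      "e \<in> set K" "dep h e" "precedes E h e" for t g h e
    by (rule reversed_block_convex[of E E' dep "set K" t g h e]) (fact dE dE' outside inside that)+
  obtain L U where LKU: "distinct (L @ K @ U)" "set (L @ K @ U) = set E"
    "\<And>e f. dep e f \<Longrightarrow> precedes (L @ K @ U) e f \<longleftrightarrow> precedes E e f"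
    using convex_block_reorder[of E K dep] dE dK KE K_order dep_sym convex by blast
  have "precedes (L @ rev K @ U) e f \<longleftrightarrow> precedes E' e f" if dep: "dep e f" for e f
  proof (cases "e \<in> set K \<and> f \<in> set K")
    case True
    show ?thesis
    proof (cases "e = f")
      case False
      thus ?thesis using precedes_rev_block[OF LKU(1)] True K_order inside by simp
    qed (use precedes_irrefl[OF dK] precedes_irrefl[OF dE'] precedes_rev_block[OF LKU(1)] True in simp)
  next
    case False
    have "precedes (L @ rev K @ U) e f \<longleftrightarrow> precedes (L @ K @ U) e f"
      using precedes_rev_block[OF LKU(1), of e f] unfolding if_not_P[OF False] .
    thus ?thesis using LKU(3)[OF dep] outside[OF dep False] by simp
  qed
  thus ?thesis using LKU by blast
qed

section \<open>Adjacent commutation classes\<close>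

lemma order_agrees_off_triple:
  assumes a: "a \<in> reduced_words n w" and b: "b \<in> reduced_words n w"
    and single: "{T \<in> T_set w. gamma_of (inv_seq n a) T \<noteq> gamma_of (inv_seq n b) T} = {(x, y, z)}"
    and dep: "\<not> disjoint_pairs e f" and off: "\<not> (e \<in> triple_pairs x y z \<and> f \<in> triple_pairs x y z)"
  shows "precedes (inv_seq n a) e f \<longleftrightarrow> precedes (inv_seq n b) e f"
proof (rule ccontr)
  assume differ: "precedes (inv_seq n a) e f \<noteq> precedes (inv_seq n b) e f"
  note ra = reduced_word_facts[OF a] and rb = reduced_word_facts[OF b]
  have "precedes (inv_seq n a) e f \<or> precedes (inv_seq n b) e f" using differ by blast
  hence "e \<noteq> f" "e \<in> inversions w" "f \<in> inversions w"
    using precedes_irrefl[OF ra(6)] precedes_irrefl[OF rb(6)] precedes_set ra(5) rb(5) by metis+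
  then obtain x' y' z' where X: "e \<in> triple_pairs x' y' z'" "f \<in> triple_pairs x' y' z'"
    "(x', y', z') \<in> {T \<in> T_set w. gamma_of (inv_seq n a) T \<noteq> gamma_of (inv_seq n b) T}"
    using dependent_order_compare[OF a b _ _ _ dep differ] by blast
  have "(x', y', z') = (x, y, z)" using X(3) single by blast
  thus False using X(1,2) off by simp
qed

lemma order_reversed_on_triple:
  assumes a: "a \<in> reduced_words n w" and b: "b \<in> reduced_words n w"
    and T: "(x, y, z) \<in> T_set w"
    and differ: "gamma_of (inv_seq n a) (x, y, z) \<noteq> gamma_of (inv_seq n b) (x, y, z)"
    and ef: "e \<in> triple_pairs x y z" "f \<in> triple_pairs x y z"
  shows "precedes (inv_seq n a) e f \<longleftrightarrow> precedes (inv_seq n b) f e"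
proof -
  have "triple_block x y z (gamma_of (inv_seq n b) (x, y, z)) =
      rev (triple_block x y z (gamma_of (inv_seq n a) (x, y, z)))"
    using differ by (auto simp: triple_block_def)
  thus ?thesis using triple_order_gamma[OF a T ef] triple_order_gamma[OF b T ef(2,1)] by (simp add: precedes_rev)
qed

lemma adjacent_imp_single_triple:
  assumes a: "a \<in> reduced_words n w" and b: "b \<in> reduced_words n w"
    and adj: "C_adj n w (comm_class a) (comm_class b)"
  shows "card {T \<in> T_set w. gamma_of (inv_seq n a) T \<noteq> gamma_of (inv_seq n b) T} = 1"
proof -
  note ra = reduced_word_facts[OF a] and rb = reduced_word_facts[OF b]
  obtain a' b' where ab': "comm_step\<^sup>*\<^sup>* a a'" "comm_step\<^sup>*\<^sup>* b b'" "braid_step a' b'"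
    using adj unfolding C_adj_def comm_class_def by blast
  have pa: "ascent_word (id_perm n) a'" "fold swap_pos a' (id_perm n) = w"
    using comm_star_swapped_pairs[OF ab'(1) ra(1) id_perm_props(1)] ra(2) by auto
  have ga: "\<And>T. gamma_of (inv_seq n a') T = gamma_of (inv_seq n a) T" using comm_star_gamma_of[OF ab'(1) ra(1)] .
  have gb: "\<And>T. gamma_of (inv_seq n b') T = gamma_of (inv_seq n b) T" using comm_star_gamma_of[OF ab'(2) rb(1)] .
  obtain pre post x y z K where xyz: "x < y" "y < z"
    and K: "K = braid_block x y z \<or> K = rev (braid_block x y z)" "inv_seq n a' = pre @ K @ post"
      "inv_seq n b' = pre @ rev K @ post"
    using braid_step_swapped_pairs[OF pa(1) id_perm_props(1) ab'(3)] by blast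
  have sK: "set K = triple_pairs x y z" using K(1) set_braid_block by auto
  have dA: "distinct (pre @ K @ post)" using ascent_word_from_id(1)[OF pa(1)] K(2) by simp
  have sA: "set (pre @ K @ post) = inversions w" using ascent_word_from_id(2)[OF pa(1)] K(2) pa(2) by simp
  have T0: "(x, y, z) \<in> T_set w"
    using T_set_iff[OF ra(3)] xyz sA sK by (auto simp: triple_pairs_def)
  have differ: "gamma_of (inv_seq n a) T \<noteq> gamma_of (inv_seq n b) T \<longleftrightarrow> (z', y') \<in> set K \<and> (y', x') \<in> set K"
    if "T = (x', y', z')" "y' < z'" for T x' y' z'
    using precedes_rev_block_differ[OF dA, of "(z', y')" "(y', x')"] ga[of T] gb[of T] K(2,3) that
    by (auto simp: gamma_of_def)
  have D: "{T \<in> T_set w. gamma_of (inv_seq n a) T \<noteq> gamma_of (inv_seq n b) T} = {(x, y, z)}"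
  proof (intro equalityI subsetI)
    fix T assume T: "T \<in> {T \<in> T_set w. gamma_of (inv_seq n a) T \<noteq> gamma_of (inv_seq n b) T}"
    obtain x' y' z' where T': "T = (x', y', z')" by (cases T)
    have lt: "x' < y'" "y' < z'" using T T' T_set_iff[OF ra(3)] by auto
    thus "T \<in> {(x, y, z)}" using differ[OF T' lt(2)] T triple_of_pairs[OF xyz lt] sK T' by auto
  next
    fix T assume "T \<in> {(x, y, z)}"
    thus "T \<in> {T \<in> T_set w. gamma_of (inv_seq n a) T \<noteq> gamma_of (inv_seq n b) T}"
      using differ[of T x y z] T0 sK xyz by (auto simp: triple_pairs_def)
  qed
  show ?thesis using D by simp
qed

lemma single_triple_imp_adjacent:
  assumes a: "a \<in> reduced_words n w" and b: "b \<in> reduced_words n w"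
    and single: "{T \<in> T_set w. gamma_of (inv_seq n a) T \<noteq> gamma_of (inv_seq n b) T} = {(x, y, z)}"
  shows "C_adj n w (comm_class a) (comm_class b)"
proof -
  note ra = reduced_word_facts[OF a] and rb = reduced_word_facts[OF b]
  let ?dep = "\<lambda>e f. \<not> disjoint_pairs e f"
  have T: "(x, y, z) \<in> T_set w"
    and differ: "gamma_of (inv_seq n a) (x, y, z) \<noteq> gamma_of (inv_seq n b) (x, y, z)"
    using single by blast+
  note xyz = T_set_reduced_word[OF a T]
  define K where "K = triple_block x y z (gamma_of (inv_seq n a) (x, y, z))"
  have K: "K = braid_block x y z \<or> K = rev (braid_block x y z)" unfolding K_def triple_block_def by simp
  have sK: "set K = triple_pairs x y z" unfolding K_def by (rule set_triple_block)
  have K_order: "\<And>e f. e \<in> set K \<Longrightarrow> f \<in> set K \<Longrightarrow> precedes K e f \<longleftrightarrow> precedes (inv_seq n a) e f"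
    using triple_order_gamma[OF a T] sK unfolding K_def by simp
  have dK: "distinct K" using K distinct_braid_block xyz(1,2) by auto
  have outside: "\<And>e f. ?dep e f \<Longrightarrow> \<not> (e \<in> set K \<and> f \<in> set K) \<Longrightarrow>
      precedes (inv_seq n a) e f \<longleftrightarrow> precedes (inv_seq n b) e f"
    using order_agrees_off_triple[OF a b single] sK by blast
  have inside: "\<And>e f. e \<in> set K \<Longrightarrow> f \<in> set K \<Longrightarrow> e \<noteq> f \<Longrightarrow>
      precedes (inv_seq n a) e f \<longleftrightarrow> precedes (inv_seq n b) f e"
    using order_reversed_on_triple[OF a b T differ] sK by blast
  have dep_sym: "\<And>e f. ?dep e f \<Longrightarrow> ?dep f e" using disjoint_pairs_sym by blast
  have KE: "set K \<subseteq> set (inv_seq n a)" using sK xyz(4) by simp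
  have "\<exists>L U. distinct (L @ K @ U) \<and> set (L @ K @ U) = set (inv_seq n a) \<and>
      (\<forall>e f. ?dep e f \<longrightarrow> precedes (L @ K @ U) e f \<longleftrightarrow> precedes (inv_seq n a) e f) \<and>
      (\<forall>e f. ?dep e f \<longrightarrow> precedes (L @ rev K @ U) e f \<longleftrightarrow> precedes (inv_seq n b) e f)"
    by (rule reversed_block_reorder[of "inv_seq n a" "inv_seq n b" K ?dep])
      (fact ra(6) rb(6) dK KE K_order dep_sym outside inside)+
  then obtain L U where LKU: "distinct (L @ K @ U)" "set (L @ K @ U) = set (inv_seq n a)"
    "\<And>e f. ?dep e f \<Longrightarrow> precedes (L @ K @ U) e f \<longleftrightarrow> precedes (inv_seq n a) e f"
    "\<And>e f. ?dep e f \<Longrightarrow> precedes (L @ rev K @ U) e f \<longleftrightarrow> precedes (inv_seq n b) e f"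
    by blast
  obtain a' where a': "comm_step\<^sup>*\<^sup>* a a'" "ascent_word (id_perm n) a'" "inv_seq n a' = L @ K @ U"
    using realize_order[OF ra(1) id_perm_props(1) LKU(1,2) LKU(3)[THEN iffD1]] by blast
  obtain b' where b': "braid_step a' b'" "ascent_word (id_perm n) b'" "inv_seq n b' = L @ rev K @ U"
    using braid_block_reverse[OF a'(2) id_perm_props(1) xyz(1,2) a'(3) K] by blast
  have "comm_step\<^sup>*\<^sup>* b' b"
  proof (rule comm_star_if_dependent_order_agrees[OF b'(2) rb(1) id_perm_props(1)])
    show "set (inv_seq n b) = set (inv_seq n b')" using b'(3) LKU(2) ra(5) rb(5) by auto
    show "precedes (inv_seq n b') e f" if "?dep e f" "precedes (inv_seq n b) e f" for e f
      using LKU(4)[OF that(1)] that(2) b'(3) by simp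
  qed
  moreover have "comm_class a \<noteq> comm_class b"
  proof
    assume "comm_class a = comm_class b"
    hence "comm_step\<^sup>*\<^sup>* a b" by (auto simp: comm_class_def)
    thus False using comm_star_gamma_of[OF _ ra(1)] differ by metis
  qed
  ultimately show ?thesis
    using a'(1) b'(1) a b comm_star_sym unfolding C_adj_def C_vertices_def comm_class_def by blast
qed

lemma adjacent_iff_single_triple:
  assumes a: "a \<in> reduced_words n w" and b: "b \<in> reduced_words n w"
  shows "C_adj n w (comm_class a) (comm_class b) \<longleftrightarrow>
    card {T \<in> T_set w. gamma_of (inv_seq n a) T \<noteq> gamma_of (inv_seq n b) T} = 1"
proof
  assume "card {T \<in> T_set w. gamma_of (inv_seq n a) T \<noteq> gamma_of (inv_seq n b) T} = 1"
  then obtain T where "{T \<in> T_set w. gamma_of (inv_seq n a) T \<noteq> gamma_of (inv_seq n b) T} = {T}"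
    by (rule card_1_singletonE)
  then show "C_adj n w (comm_class a) (comm_class b)"
    using single_triple_imp_adjacent[OF a b] by (cases T) blast
qed (rule adjacent_imp_single_triple[OF a b])

lemma C_walk_0_iff: "C_walk n w A B 0 \<longleftrightarrow> A = B \<and> A \<in> C_vertices n w"
proof
  assume "C_walk n w A B 0"
  then obtain ps where "length ps = 1" "ps ! 0 = A" "ps ! 0 = B" "set ps \<subseteq> C_vertices n w"
    unfolding C_walk_def by auto
  thus "A = B \<and> A \<in> C_vertices n w" by (cases ps) auto
next
  assume "A = B \<and> A \<in> C_vertices n w"
  thus "C_walk n w A B 0" unfolding C_walk_def by (intro exI[of _ "[A]"]) auto
qed

lemma C_walk_1_iff: "C_walk n w A B 1 \<longleftrightarrow> C_adj n w A B"
proof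
  assume "C_walk n w A B 1"
  then obtain ps where p: "ps ! 0 = A" "ps ! 1 = B" "\<forall>i<1. C_adj n w (ps ! i) (ps ! (i + 1))"
    unfolding C_walk_def by blast
  hence "C_adj n w (ps ! 0) (ps ! (0 + 1))" by blast
  thus "C_adj n w A B" using p by simp
next
  assume adj: "C_adj n w A B"
  hence "A \<in> C_vertices n w" "B \<in> C_vertices n w" by (auto simp: C_adj_def)
  thus "C_walk n w A B 1" unfolding C_walk_def using adj
    by (intro exI[of _ "[A, B]"]) (auto simp: less_Suc_eq)
qed

lemma C_dist_eq_1_iff:
  assumes "A \<in> C_vertices n w"
  shows "C_dist n w A B = 1 \<longleftrightarrow> C_adj n w A B"
proof
  assume adj: "C_adj n w A B"
  have ne: "A \<noteq> B" using adj by (auto simp: C_adj_def)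
  have w1: "1 \<in> {k. C_walk n w A B k}" using C_walk_1_iff adj by simp
  have w0: "0 \<notin> {k. C_walk n w A B k}" using C_walk_0_iff ne by simp
  have "(INF k \<in> {k. C_walk n w A B k}. enat k) \<le> enat 1" by (rule INF_lower[OF w1])
  hence le: "C_dist n w A B \<le> 1" unfolding C_dist_def by (simp add: one_enat_def)
  have ge: "1 \<le> C_dist n w A B" unfolding C_dist_def
  proof (rule INF_greatest)
    fix k assume "k \<in> {k. C_walk n w A B k}"
    hence "k \<noteq> 0" using w0 by (cases k) auto
    thus "1 \<le> enat k" by (simp add: one_enat_def)
  qed
  show "C_dist n w A B = 1" using le ge by simp
next
  assume d: "C_dist n w A B = 1"
  let ?S = "enat ` {k. C_walk n w A B k}"
  have d': "Inf ?S = 1" using d unfolding C_dist_def by simp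
  have "?S \<noteq> {}" using d' by (auto simp: Inf_enat_def split: if_splits)
  hence "(LEAST x. x \<in> ?S) = 1" using d' \<open>?S \<noteq> {}\<close> by (metis Inf_enat_def)
  moreover have "(LEAST x. x \<in> ?S) \<in> ?S"
  proof -
    obtain s0 where "s0 \<in> ?S" using \<open>?S \<noteq> {}\<close> by blast
    thus ?thesis by (rule LeastI)
  qed
  ultimately have "1 \<in> ?S" by simp
  hence "C_walk n w A B 1" by (auto simp: one_enat_def)
  thus "C_adj n w A B" using C_walk_1_iff by simp
qed

theorem mainTheorem4:
  fixes n :: nat and w a b :: "nat list"
  assumes "is_perm n w"
    and "a \<in> reduced_words n w" and "b \<in> reduced_words n w"
  shows "(C_dist n w (comm_class a) (comm_class b) = 1 \<longleftrightarrow> t_count n w a b = 1)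
    \<and> (t_count n w a b = 1 \<longleftrightarrow>
         card {xyz \<in> T_set w. Gamma n a xyz \<noteq> Gamma n b xyz} = 1)"
proof -
  let ?D = "{T \<in> T_set w. gamma_of (inv_seq n a) T \<noteq> gamma_of (inv_seq n b) T}"
  have "C_dist n w (comm_class a) (comm_class b) = 1 \<longleftrightarrow> C_adj n w (comm_class a) (comm_class b)"
    using assms(2) by (intro C_dist_eq_1_iff) (auto simp: C_vertices_def)
  also have "\<dots> \<longleftrightarrow> card ?D = 1"
    by (rule adjacent_iff_single_triple[OF assms(2,3)])
  also have "?D = {T \<in> T_set w. Gamma n a T \<noteq> Gamma n b T}"
    using Gamma_differ_eq[OF assms(2,3)] by simp
  finally show ?thesis using t_count_eq_card by simp
qed

end
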